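(* Fix an integer $k\ge3$. If $\mathrm{ex}(n,2k)\in\Omega(n^{c})$ for some constant $c>1$, then the approximation ratio of $k$-Opt for \textsc{Metric TSP} satisfies $\alpha_k(n)\in\Omega(n^{1-\frac1c})$.
   Context: A \textsc{Metric TSP} instance on $n$ vertices is the complete graph $K_n$ with edge costs $c:E(K_n)\to\mathbb{R}_{\ge0}$ satisfying the triangle inequality. A tour is a Hamiltonian cycle, with length $c(T)=\sum_{e\in T}c(e)$; $\mathrm{OPT}(I)$ is the minimum tour length. A $k$-move replaces at most $k$ edges of a tour by other edges so that the result is again a tour; it is improving if the new tour is strictly shorter. A tour is $k$-optimal if no improving $k$-move exists. $\alpha_k(n)$ is the supremum of $c(T)/\mathrm{OPT}(I)$ over all \textsc{Metric TSP} instances $I$ on $n$ vertices with $\mathrm{OPT}(I)>0$ and all $k$-optimal tours $T$ of $I$. The girth of a graph is the length of its shortest cycle ($\infty$ if none). $\mathrm{ex}(n,2k)$ is the maximum number of edges of a simple graph on $n$ vertices with girth at least $2k$. *)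

theory Defs
  imports Complex_Main "HOL-Library.Landau_Symbols" "HOL-Library.Extended_Nat"
begin

text \<open>Vertices of K_n are 0..<n; edges are 2-element subsets. A cost function
  assigns a real to each edge (unordered pair), so symmetry is built in.\<close>

definition metric_instance :: "nat \<Rightarrow> (nat set \<Rightarrow> real) \<Rightarrow> bool" where
  "metric_instance n w \<longleftrightarrow>
     (\<forall>u v. u < n \<longrightarrow> v < n \<longrightarrow> u \<noteq> v \<longrightarrow> 0 \<le> w {u, v}) \<and>
     (\<forall>u v x. u < n \<longrightarrow> v < n \<longrightarrow> x < n \<longrightarrow> u \<noteq> v \<longrightarrow> u \<noteq> x \<longrightarrow> v \<noteq> x \<longrightarrow>
        w {u, v} \<le> w {u, x} + w {x, v})"

definition is_tour :: "nat \<Rightarrow> nat set set \<Rightarrow> bool" where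
  "is_tour n T \<longleftrightarrow> 3 \<le> n \<and>
     (\<exists>\<sigma>. bij_betw \<sigma> {0..<n} {0..<n} \<and> T = {{\<sigma> i, \<sigma> (Suc i mod n)} | i. i < n})"

definition tour_cost :: "(nat set \<Rightarrow> real) \<Rightarrow> nat set set \<Rightarrow> real" where
  "tour_cost w T = (\<Sum>e\<in>T. w e)"

definition OPT :: "nat \<Rightarrow> (nat set \<Rightarrow> real) \<Rightarrow> real" where
  "OPT n w = Inf {tour_cost w T | T. is_tour n T}"

definition k_move :: "nat \<Rightarrow> nat \<Rightarrow> nat set set \<Rightarrow> nat set set \<Rightarrow> bool" where
  "k_move k n T T' \<longleftrightarrow> is_tour n T \<and> is_tour n T' \<and> card (T - T') \<le> k"

definition k_optimal :: "nat \<Rightarrow> nat \<Rightarrow> (nat set \<Rightarrow> real) \<Rightarrow> nat set set \<Rightarrow> bool" where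
  "k_optimal k n w T \<longleftrightarrow> is_tour n T \<and>
     \<not> (\<exists>T'. k_move k n T T' \<and> tour_cost w T' < tour_cost w T)"

definition alpha :: "nat \<Rightarrow> nat \<Rightarrow> real" where
  "alpha k n = Sup {tour_cost w T / OPT n w | w T.
       metric_instance n w \<and> OPT n w > 0 \<and> k_optimal k n w T}"

definition simple_graph :: "nat \<Rightarrow> nat set set \<Rightarrow> bool" where
  "simple_graph n E \<longleftrightarrow> (\<forall>e\<in>E. card e = 2 \<and> e \<subseteq> {0..<n})"

definition has_cycle_of_length :: "nat set set \<Rightarrow> nat \<Rightarrow> bool" where
  "has_cycle_of_length E l \<longleftrightarrow> 3 \<le> l \<and>
     (\<exists>v :: nat \<Rightarrow> nat. inj_on v {0..<l} \<and> (\<forall>i<l. {v i, v (Suc i mod l)} \<in> E))"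

definition girth :: "nat set set \<Rightarrow> enat" where
  "girth E = (INF l \<in> {l. has_cycle_of_length E l}. enat l)"

definition ex :: "nat \<Rightarrow> nat \<Rightarrow> nat" where
  "ex n g = Max {card E | E. simple_graph n E \<and> enat g \<le> girth E}"

end

theory Submission
  imports Defs "HOL-Library.Multiset" "HOL-Library.Disjoint_Sets"
begin

text \<open>
  Take a graph of girth at least \<open>2k\<close> with \<open>m \<approx> C N\<^sup>c \<le> n\<close> edges on \<open>N \<approx> (n/C)\<^sup>1\<^sup>/\<^sup>c\<close>
  vertices. Splitting it into edge-disjoint closed trails and merging those that meet yields a
  closed trail \<open>W\<close> with about \<open>C N\<^sup>c\<^sup>-\<^sup>1\<close> times as many edges as vertices. Lay out the \<open>n\<close>
  tour positions along \<open>W\<close> (surplus positions sit at its start vertex) and let the cost of two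
  positions be the graph distance of their images, capped at \<open>k\<close>. The tour following \<open>W\<close> costs
  \<open>|E(W)|\<close>, while grouping the positions by vertex gives a tour of cost at most \<open>k |V(W)|\<close>.

  The tour following \<open>W\<close> is \<open>k\<close>-optimal: if a \<open>k\<close>-move improved it, the removed trail edges
  together with shortest walks realising the costs of the added edges would form an edge multiset
  with even degrees and fewer than \<open>2k\<close> elements. Below the girth such a multiset has only even
  multiplicities, so every removed trail edge lies on one of the walks, and the move gains nothing.
  So \<open>\<alpha>\<^sub>k(n) \<ge> |E(W)| / (k |V(W)|) \<in> \<Omega>(N\<^sup>c\<^sup>-\<^sup>1) = \<Omega>(n\<^sup>1\<^sup>-\<^sup>1\<^sup>/\<^sup>c)\<close>.
\<close>


section \<open>Walks as vertex lists\<close>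

fun walk_edges :: "'a list \<Rightarrow> 'a set list" where
  "walk_edges (x # y # zs) = {x, y} # walk_edges (y # zs)"
| "walk_edges _ = []"

lemma length_walk_edges: "length (walk_edges xs) = length xs - 1"
  by (induction xs rule: walk_edges.induct) auto

lemma walk_edges_nth: "Suc i < length xs \<Longrightarrow> walk_edges xs ! i = {xs ! i, xs ! Suc i}"
proof (induction xs arbitrary: i rule: walk_edges.induct)
  case (1 x y zs) then show ?case by (cases i) auto
qed auto

lemma set_walk_edges: "set (walk_edges xs) = {{xs ! i, xs ! Suc i} | i. Suc i < length xs}"
proof -
  have "set (walk_edges xs) = {walk_edges xs ! i | i. i < length (walk_edges xs)}"
    by (simp add: set_conv_nth)
  also have "\<dots> = {{xs ! i, xs ! Suc i} | i. Suc i < length xs}"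
  proof (intro equalityI subsetI)
    fix e assume "e \<in> {walk_edges xs ! i | i. i < length (walk_edges xs)}"
    then obtain i where "i < length (walk_edges xs)" "e = walk_edges xs ! i" by auto
    then show "e \<in> {{xs ! i, xs ! Suc i} | i. Suc i < length xs}"
      by (auto simp: length_walk_edges walk_edges_nth)
  next
    fix e assume "e \<in> {{xs ! i, xs ! Suc i} | i. Suc i < length xs}"
    then obtain i where "Suc i < length xs" "e = {xs ! i, xs ! Suc i}" by auto
    then show "e \<in> {walk_edges xs ! i | i. i < length (walk_edges xs)}"
      by (auto simp: length_walk_edges walk_edges_nth intro!: exI[of _ i])
  qed
  finally show ?thesis .
qed

lemma walk_edges_append:
  "xs \<noteq> [] \<Longrightarrow> walk_edges (xs @ ys) = walk_edges xs @ walk_edges (last xs # ys)"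
proof (induction xs rule: walk_edges.induct)
  case ("2_2" x) then show ?case by (cases ys) auto
qed auto

lemma walk_edges_rev: "walk_edges (rev xs) = rev (walk_edges xs)"
proof (induction xs rule: walk_edges.induct)
  case (1 x y zs)
  have "walk_edges (rev (x # y # zs)) = walk_edges (rev (y # zs) @ [x])" by simp
  also have "\<dots> = walk_edges (rev (y # zs)) @ walk_edges [last (rev (y # zs)), x]"
    by (rule walk_edges_append) simp
  also have "\<dots> = rev (walk_edges (y # zs)) @ [{x, y}]" using 1 by (simp add: insert_commute)
  finally show ?case by simp
qed auto

lemma set_subset_Union_walk_edges: "2 \<le> length xs \<Longrightarrow> set xs \<subseteq> \<Union>(set (walk_edges xs))"
proof (induction xs rule: walk_edges.induct)
  case (1 x y zs) then show ?case by (cases zs) auto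
qed auto

text \<open>Each inner occurrence of \<open>v\<close> in a walk lies on two of its edges, each end occurrence on one.\<close>

lemma even_walk_degree:
  assumes "ws \<noteq> []" "set (walk_edges ws) \<subseteq> E" "\<forall>e\<in>E. card e = 2"
  shows "even (length (filter (\<lambda>e. v \<in> e) (walk_edges ws))
    + (if hd ws = v then 1 else 0) + (if last ws = v then 1 else 0))"
  using assms
proof (induction ws rule: walk_edges.induct)
  case (1 x y zs)
  have "{x, y} \<in> E" using 1 by simp
  then have xy: "x \<noteq> y" using 1(4) by fastforce
  have IH: "even (length (filter (\<lambda>e. v \<in> e) (walk_edges (y # zs)))
      + (if y = v then 1 else 0) + (if last (y # zs) = v then 1 else 0))"
    using 1 by simp
  show ?case using IH xy by (auto split: if_splits)
qed auto


definition degree :: "'a set set \<Rightarrow> 'a \<Rightarrow> nat" where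
  "degree F v = card {e\<in>F. v \<in> e}"

definition path :: "'a set set \<Rightarrow> 'a list \<Rightarrow> bool" where
  "path F xs \<longleftrightarrow> distinct xs \<and> set (walk_edges xs) \<subseteq> F"

lemma Suc_mod_if: "i < l \<Longrightarrow> Suc i mod l = (if Suc i = l then 0 else Suc i)"
  by auto

lemma inj_on_cycle_edges:
  assumes inj: "inj_on f {0..<l}" and l: "3 \<le> l"
  shows "inj_on (\<lambda>i. {f i, f (Suc i mod l)}) {0..<l}"
proof (rule inj_onI)
  fix i j assume "i \<in> {0..<l}" "j \<in> {0..<l}" and eq: "{f i, f (Suc i mod l)} = {f j, f (Suc j mod l)}"
  then have i: "i < l" and j: "j < l" by auto
  have si: "Suc i mod l < l" and sj: "Suc j mod l < l" using i j by auto
  from eq consider "f i = f j \<and> f (Suc i mod l) = f (Suc j mod l)"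
    | "f i = f (Suc j mod l) \<and> f (Suc i mod l) = f j"
    by (auto simp: doubleton_eq_iff)
  then show "i = j"
  proof cases
    case 1 then show ?thesis using inj i j by (auto dest: inj_onD)
  next
    case 2
    then have a: "i = Suc j mod l" and b: "Suc i mod l = j"
      using inj i j si sj by (auto dest: inj_onD)
    show ?thesis using a b i j l by (auto simp: Suc_mod_if split: if_splits)
  qed
qed

lemma card_cycle_edges:
  "inj_on f {0..<l} \<Longrightarrow> 3 \<le> l \<Longrightarrow> card ((\<lambda>i. {f i, f (Suc i mod l)}) ` {0..<l}) = l"
  by (simp add: card_image inj_on_cycle_edges)

lemma has_cycle_of_length_mono:
  "has_cycle_of_length F l \<Longrightarrow> F \<subseteq> E \<Longrightarrow> has_cycle_of_length E l"
  unfolding has_cycle_of_length_def by blast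

lemma has_cycle_of_length_le_card:
  assumes "finite F" "has_cycle_of_length F l"
  shows "l \<le> card F"
proof -
  obtain v where "3 \<le> l" "inj_on v {0..<l}" "\<forall>i<l. {v i, v (Suc i mod l)} \<in> F"
    using assms(2) unfolding has_cycle_of_length_def by blast
  then have "card ((\<lambda>i. {v i, v (Suc i mod l)}) ` {0..<l}) \<le> card F"
    using assms(1) by (intro card_mono) auto
  then show ?thesis using card_cycle_edges[of v l] \<open>inj_on v {0..<l}\<close> \<open>3 \<le> l\<close> by simp
qed

lemma maximal_path_exists:
  assumes finU: "finite (\<Union>F)" and ab: "{a, b} \<in> F" "a \<noteq> b"
  obtains xs where "path F xs" "2 \<le> length xs" "\<And>w. {last xs, w} \<in> F \<Longrightarrow> w \<in> set xs"
proof -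
  define S where "S = {xs. path F xs \<and> 2 \<le> length xs}"
  have abS: "[a, b] \<in> S" using ab by (auto simp: S_def path_def)
  have bound: "length xs < Suc (card (\<Union>F))" if "xs \<in> S" for xs
  proof -
    have "set xs \<subseteq> \<Union>F"
      using that set_subset_Union_walk_edges[of xs] by (auto simp: S_def path_def)
    then have "card (set xs) \<le> card (\<Union>F)" using finU by (simp add: card_mono)
    then show ?thesis using that by (auto simp: S_def path_def distinct_card)
  qed
  obtain xs where xsS: "xs \<in> S" and mx: "\<And>ys. ys \<in> S \<Longrightarrow> length ys \<le> length xs"
    using ex_has_greatest_nat[of "\<lambda>xs. xs \<in> S" "[a, b]" length "Suc (card (\<Union>F))"] abS bound
    by blast
  have "w \<in> set xs" if "{last xs, w} \<in> F" for w
  proof (rule ccontr)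
    assume nw: "w \<notin> set xs"
    have "xs \<noteq> []" using xsS by (auto simp: S_def)
    then have "walk_edges (xs @ [w]) = walk_edges xs @ [{last xs, w}]"
      using walk_edges_append[of xs "[w]"] by simp
    then have "xs @ [w] \<in> S" using xsS nw that by (auto simp: S_def path_def)
    then show False using mx[of "xs @ [w]"] by simp
  qed
  then show thesis using that xsS by (auto simp: S_def)
qed

lemma has_cycle_of_path_chord:
  assumes pxs: "path F xs" and j3: "j + 3 \<le> length xs" and chord: "{last xs, xs ! j} \<in> F"
  shows "has_cycle_of_length F (length xs - j)"
proof -
  define l where "l = length xs - j"
  define v where "v = (\<lambda>i. xs ! (j + i))"
  have dxs: "distinct xs" and exs: "set (walk_edges xs) \<subseteq> F" using pxs by (auto simp: path_def)
  have l3: "3 \<le> l" using j3 l_def by simp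
  have injv: "inj_on v {0..<l}"
    using dxs by (auto simp: inj_on_def v_def l_def nth_eq_iff_index_eq)
  have "{v i, v (Suc i mod l)} \<in> F" if "i < l" for i
  proof (cases "Suc i = l")
    case True
    then have "j + i = length xs - 1" "Suc i mod l = 0" using j3 l_def by auto
    moreover have "last xs = xs ! (length xs - 1)" using j3 by (intro last_conv_nth) auto
    ultimately have "v i = last xs" "v (Suc i mod l) = xs ! j" by (simp_all add: v_def)
    then show ?thesis using chord by (simp add: insert_commute)
  next
    case False
    then have "Suc i < l" using that by simp
    then have "{v i, v (Suc i mod l)} \<in> set (walk_edges xs)"
      unfolding set_walk_edges v_def l_def by (auto intro!: exI[of _ "j + i"])
    then show ?thesis using exs by auto
  qed
  then show ?thesis unfolding has_cycle_of_length_def l_def[symmetric] using l3 injv by blast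
qed

text \<open>The last vertex of a maximal path has a second neighbour; it lies on the path and closes a cycle.\<close>

lemma has_cycle_if_no_degree_one:
  assumes fin: "finite F" and ne: "F \<noteq> {}" and two: "\<forall>e\<in>F. card e = 2"
    and nd: "\<forall>v. degree F v \<noteq> 1"
  shows "\<exists>l. has_cycle_of_length F l"
proof -
  have finU: "finite (\<Union>F)" using fin two by (intro finite_Union) (auto intro: card_ge_0_finite)
  obtain e where e: "e \<in> F" using ne by auto
  then obtain a b where ab: "e = {a, b}" "a \<noteq> b" using two card_2_iff by metis
  obtain xs where pxs: "path F xs" and len2: "2 \<le> length xs"
    and mx: "\<And>w. {last xs, w} \<in> F \<Longrightarrow> w \<in> set xs"
    using maximal_path_exists[OF finU] e ab by metis
  define len where "len = length xs"
  define u where "u = xs ! (len - 1)"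
  define p where "p = xs ! (len - 2)"
  have last_u: "last xs = u" using len2 by (cases xs) (auto simp: u_def len_def last_conv_nth)
  have pu: "{p, u} \<in> F"
  proof -
    have "{xs ! (len - 2), xs ! Suc (len - 2)} \<in> set (walk_edges xs)" unfolding set_walk_edges
      using len2 len_def by auto
    moreover have "Suc (len - 2) = len - 1" using len2 len_def by simp
    ultimately have "{p, u} \<in> set (walk_edges xs)" by (simp add: p_def u_def)
    then show ?thesis using pxs by (auto simp: path_def)
  qed
  then have "degree F u \<noteq> 0" using fin by (auto simp: degree_def card_eq_0_iff)
  then have "2 \<le> degree F u" using nd[rule_format, of u] by linarith
  have "\<exists>e'\<in>F. u \<in> e' \<and> e' \<noteq> {p, u}"
  proof (rule ccontr)
    assume "\<not> ?thesis"
    then have "{e\<in>F. u \<in> e} \<subseteq> {{p, u}}" by auto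
    then have "card {e\<in>F. u \<in> e} \<le> card {{p, u}}" by (intro card_mono) auto
    then show False using \<open>2 \<le> degree F u\<close> by (simp add: degree_def)
  qed
  then obtain e' where e': "e' \<in> F" "u \<in> e'" "e' \<noteq> {p, u}" by blast
  then obtain w where "e' = {u, w}" "w \<noteq> u"
    using two by (metis card_2_iff insert_commute insert_iff singletonD)
  then have w: "w \<noteq> u" "{u, w} \<in> F" "w \<noteq> p" using e' by (auto simp: insert_commute)
  obtain j where j: "j < len" "xs ! j = w"
    using mx[of w] w last_u by (auto simp: in_set_conv_nth len_def)
  have "j \<noteq> len - 1" using j w u_def by auto
  moreover have "j \<noteq> len - 2" using j w p_def by auto
  ultimately have "j + 3 \<le> length xs" using j len_def by linarith
  then show ?thesis using has_cycle_of_path_chord[OF pxs] w(2) last_u j(2) by blast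
qed


section \<open>Closed trails\<close>

definition closed_trail :: "'a set set \<Rightarrow> 'a list \<Rightarrow> bool" where
  "closed_trail E ws \<longleftrightarrow>
     2 \<le> length ws \<and> hd ws = last ws \<and> distinct (walk_edges ws) \<and> set (walk_edges ws) \<subseteq> E"

lemma closed_trail_mono: "closed_trail E ws \<Longrightarrow> E \<subseteq> E' \<Longrightarrow> closed_trail E' ws"
  by (auto simp: closed_trail_def)

lemma disjoint_family_on_insertI:
  "disjoint_family_on A I \<Longrightarrow> (\<And>j. j \<in> I \<Longrightarrow> j \<noteq> i \<Longrightarrow> A i \<inter> A j = {})
    \<Longrightarrow> disjoint_family_on A (insert i I)"
  unfolding disjoint_family_on_def by blast

lemma closed_trail_of_cycle:
  assumes "has_cycle_of_length F l"
  shows "\<exists>ws. closed_trail F ws \<and> length (walk_edges ws) = l"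
proof -
  from assms obtain v where l3: "3 \<le> l" and inj: "inj_on v {0..<l}"
    and ed: "\<forall>i<l. {v i, v (Suc i mod l)} \<in> F"
    unfolding has_cycle_of_length_def by blast
  define ws where "ws = map (\<lambda>i. v (i mod l)) [0..<Suc l]"
  have len: "length ws = Suc l" by (simp add: ws_def)
  have nth: "Suc i < length ws \<Longrightarrow> {ws ! i, ws ! Suc i} = {v i, v (Suc i mod l)}" for i
    by (simp add: ws_def len nth_append del: upt_Suc)
  have sp: "set (walk_edges ws) = (\<lambda>i. {v i, v (Suc i mod l)}) ` {0..<l}"
  proof (intro equalityI subsetI)
    fix e assume "e \<in> set (walk_edges ws)"
    then obtain i where "Suc i < length ws" "e = {ws!i, ws!Suc i}" by (auto simp: set_walk_edges)
    then show "e \<in> (\<lambda>i. {v i, v (Suc i mod l)}) ` {0..<l}" using nth len by auto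
  next
    fix e assume "e \<in> (\<lambda>i. {v i, v (Suc i mod l)}) ` {0..<l}"
    then obtain i where "i < l" "e = {v i, v (Suc i mod l)}" by auto
    then show "e \<in> set (walk_edges ws)" unfolding set_walk_edges using nth[of i] len by auto
  qed
  have dist: "distinct (walk_edges ws)"
    by (rule card_distinct) (simp add: sp card_cycle_edges[OF inj l3] length_walk_edges len)
  have "hd ws = last ws" using l3 by (simp add: ws_def hd_map last_map del: upt_Suc)
  then have "closed_trail F ws" using dist sp ed l3 len by (auto simp: closed_trail_def)
  moreover have "length (walk_edges ws) = l" by (simp add: length_walk_edges len)
  ultimately show ?thesis by auto
qed

lemma card_Union_remove_pendant_edge:
  assumes finU: "finite (\<Union>E)" and v: "degree E v = 1"
  obtains e where "e \<in> E" "card (\<Union>(E - {e})) < card (\<Union>E)"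
proof -
  obtain e where ev: "{x\<in>E. v \<in> x} = {e}"
    using v unfolding degree_def by (auto simp: card_Suc_eq)
  then have e: "e \<in> E" "v \<in> e" by auto
  have "\<Union>(E - {e}) \<subseteq> \<Union>E - {v}" using ev by auto
  then have "card (\<Union>(E - {e})) \<le> card (\<Union>E - {v})" using finU by (intro card_mono) auto
  also have "\<dots> < card (\<Union>E)" using finU e by (intro card_Diff1_less) auto
  finally show thesis using that e(1) by blast
qed

text \<open>Peel off pendant edges (each costs one vertex) and cycles until nothing is left.\<close>

lemma closed_trail_decomposition:
  fixes E :: "nat set set"
  assumes "finite E" "\<forall>e\<in>E. card e = 2"
  shows "\<exists>CS. finite CS \<and> (\<forall>c\<in>CS. closed_trail E c) \<and> disjoint_family_on (\<lambda>c. set (walk_edges c)) CS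
     \<and> card E \<le> card (\<Union>c\<in>CS. set (walk_edges c)) + card (\<Union>E)"
  using assms
proof (induction "card E" arbitrary: E rule: less_induct)
  case less
  have finU: "finite (\<Union>E)" using less.prems by (intro finite_Union) (auto intro: card_ge_0_finite)
  consider "E = {}" | v where "degree E v = 1" | "E \<noteq> {}" "\<forall>v. degree E v \<noteq> 1" by blast
  then show ?case
  proof cases
    case 1 then show ?thesis by (intro exI[of _ "{}"]) (auto simp: disjoint_family_on_def)
  next
    case (2 v)
    obtain e where e: "e \<in> E" "card (\<Union>(E - {e})) < card (\<Union>E)"
      using card_Union_remove_pendant_edge[OF finU 2] by blast
    have "card (E - {e}) < card E" using less.prems(1) e(1) by (rule card_Diff1_less)
    then obtain CS where CS: "finite CS" "\<forall>c\<in>CS. closed_trail (E - {e}) c"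
      "disjoint_family_on (\<lambda>c. set (walk_edges c)) CS"
      "card (E - {e}) \<le> card (\<Union>c\<in>CS. set (walk_edges c)) + card (\<Union>(E - {e}))"
      using less.hyps less.prems by blast
    moreover have "card E = Suc (card (E - {e}))"
      by (rule card_Suc_Diff1[symmetric]) (use less.prems(1) e(1) in auto)
    ultimately show ?thesis using e(2) by (intro exI[of _ CS]) (auto intro: closed_trail_mono)
  next
    case 3
    obtain l where l: "has_cycle_of_length E l"
      using has_cycle_if_no_degree_one[OF less.prems(1) 3(1) less.prems(2) 3(2)] by blast
    obtain c where c: "closed_trail E c" "length (walk_edges c) = l"
      using closed_trail_of_cycle[OF l] by blast
    define E' where "E' = E - set (walk_edges c)"
    have l3: "3 \<le> l" using l by (simp add: has_cycle_of_length_def)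
    have lE: "l \<le> card E" using less.prems(1) l by (rule has_cycle_of_length_le_card)
    have cardc: "card (set (walk_edges c)) = l" using c by (simp add: closed_trail_def distinct_card)
    have cE: "card E' = card E - l" using c cardc less.prems(1)
      by (simp add: E'_def closed_trail_def card_Diff_subset finite_subset)
    then have cE': "card E' < card E" using lE l3 by simp
    obtain CS where CS: "finite CS" "\<forall>c\<in>CS. closed_trail E' c"
      "disjoint_family_on (\<lambda>c. set (walk_edges c)) CS"
      "card E' \<le> card (\<Union>c\<in>CS. set (walk_edges c)) + card (\<Union>E')"
      using less.hyps[OF cE'] less.prems by (auto simp: E'_def)
    have dis: "set (walk_edges c) \<inter> set (walk_edges c') = {}" if "c' \<in> CS" for c'
      using CS(2) that by (auto simp: closed_trail_def E'_def)
    have "card (set (walk_edges c) \<union> (\<Union>c'\<in>CS. set (walk_edges c')))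
        = l + card (\<Union>c'\<in>CS. set (walk_edges c'))"
      using dis CS(1) cardc by (subst card_Un_disjoint) auto
    moreover have "card (\<Union>E') \<le> card (\<Union>E)" using finU by (intro card_mono) (auto simp: E'_def)
    ultimately have "card E \<le> card (\<Union>c'\<in>insert c CS. set (walk_edges c')) + card (\<Union>E)"
      using CS(4) cE lE by simp
    moreover have "\<forall>c'\<in>insert c CS. closed_trail E c'"
      using c CS(2) by (auto simp: E'_def intro: closed_trail_mono)
    moreover have "disjoint_family_on (\<lambda>c. set (walk_edges c)) (insert c CS)"
      using CS(3) dis by (rule disjoint_family_on_insertI)
    ultimately show ?thesis using CS(1) by (intro exI[of _ "insert c CS"]) auto
  qed
qed

lemma closed_trail_rotate:
  assumes ct: "closed_trail E xs" and u: "u \<in> set xs"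
  shows "\<exists>xs'. closed_trail E xs' \<and> hd xs' = u \<and> set (walk_edges xs') = set (walk_edges xs) \<and> set xs' = set xs"
proof -
  obtain a b where xs: "xs = a @ u # b" using split_list[OF u] by blast
  show ?thesis
  proof (cases "a = []")
    case True then show ?thesis using ct xs by auto
  next
    case False
    define xs' where "xs' = (u # b) @ tl a @ [u]"
    have hl: "hd a = last (u # b)" using ct xs False by (simp add: closed_trail_def)
    have e1: "walk_edges xs = walk_edges a @ walk_edges (last a # u # b)"
      using walk_edges_append[OF False, of "u # b"] xs by simp
    have "walk_edges xs' = walk_edges (u # b) @ walk_edges (last (u # b) # tl a @ [u])"
      unfolding xs'_def by (rule walk_edges_append) simp
    also have "last (u # b) # tl a @ [u] = a @ [u]" using hl False by (metis append_Cons list.collapse)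
    also have "walk_edges (a @ [u]) = walk_edges a @ walk_edges [last a, u]" using walk_edges_append[OF False] by simp
    finally have e2: "walk_edges xs' = walk_edges (u # b) @ walk_edges a @ [{last a, u}]" by simp
    have m: "mset (walk_edges xs') = mset (walk_edges xs)" using e1 e2 by simp
    have "distinct (walk_edges xs')" using ct mset_eq_imp_distinct_iff[OF m] by (simp add: closed_trail_def)
    moreover have "set (walk_edges xs') = set (walk_edges xs)" using arg_cong[OF m, of set_mset] by simp
    moreover have "set xs' = set xs"
    proof -
      have "set a = insert (hd a) (set (tl a))" using False by (metis list.collapse list.simps(15))
      moreover have "hd a \<in> set (u # b)" using hl by simp
      ultimately show ?thesis unfolding xs xs'_def by auto
    qed
    moreover have "2 \<le> length xs'" "hd xs' = u" "last xs' = u" by (auto simp: xs'_def)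
    ultimately have "closed_trail E xs'" "set (walk_edges xs') = set (walk_edges xs)" "set xs' = set xs" "hd xs' = u"
      using ct unfolding closed_trail_def by simp_all
    then show ?thesis by blast
  qed
qed

lemma closed_trail_splice:
  assumes cx: "closed_trail E xs" and cy: "closed_trail E ys" and u: "u \<in> set xs" "u \<in> set ys"
    and dj: "set (walk_edges xs) \<inter> set (walk_edges ys) = {}"
  shows "\<exists>zs. closed_trail E zs \<and> set (walk_edges zs) = set (walk_edges xs) \<union> set (walk_edges ys) \<and> set zs = set xs \<union> set ys"
proof -
  obtain xs' where x: "closed_trail E xs'" "hd xs' = u" "set (walk_edges xs') = set (walk_edges xs)" "set xs' = set xs"
    using closed_trail_rotate[OF cx u(1)] by blast
  obtain ys' where y: "closed_trail E ys'" "hd ys' = u" "set (walk_edges ys') = set (walk_edges ys)" "set ys' = set ys"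
    using closed_trail_rotate[OF cy u(2)] by blast
  define zs where "zs = xs' @ tl ys'"
  have xne: "xs' \<noteq> []" and yne: "ys' \<noteq> []" using x(1) y(1) by (auto simp: closed_trail_def)
  have lx: "last xs' = u" using x by (simp add: closed_trail_def)
  have ly: "u # tl ys' = ys'" using y(2) yne by (metis list.collapse)
  have pz: "walk_edges zs = walk_edges xs' @ walk_edges ys'"
    unfolding zs_def using walk_edges_append[OF xne, of "tl ys'"] lx ly by simp
  have "distinct (walk_edges zs)" using pz x y dj by (simp add: closed_trail_def)
  moreover have "set (walk_edges zs) = set (walk_edges xs) \<union> set (walk_edges ys)" using pz x y by simp
  moreover have "set zs = set xs \<union> set ys"
  proof -
    have "set ys' = insert u (set (tl ys'))" using ly by (metis list.simps(15))
    then show ?thesis using x y u by (auto simp: zs_def)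
  qed
  moreover have "2 \<le> length zs" using x(1) by (simp add: zs_def closed_trail_def)
  moreover have "hd zs = u" using x(2) xne by (simp add: zs_def)
  moreover have "last zs = u"
  proof -
    have "tl ys' \<noteq> []" using y(1) yne by (cases ys') (auto simp: closed_trail_def)
    then have "last zs = last ys'" by (simp add: zs_def last_tl)
    also have "\<dots> = hd ys'" using y(1) by (simp add: closed_trail_def)
    finally show ?thesis using y(2) by simp
  qed
  moreover have "set (walk_edges zs) \<subseteq> E" using pz x y by (simp add: closed_trail_def)
  ultimately have "closed_trail E zs" "set (walk_edges zs) = set (walk_edges xs) \<union> set (walk_edges ys)" "set zs = set xs \<union> set ys"
    unfolding closed_trail_def by simp_all
  then show ?thesis by blast
qed

lemma closed_trail_splice_all:
  assumes "finite U" "closed_trail E c"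
    and "\<And>t. t \<in> U \<Longrightarrow>
      closed_trail E t \<and> set t \<inter> set c \<noteq> {} \<and> set (walk_edges t) \<inter> set (walk_edges c) = {}"
    and "disjoint_family_on (\<lambda>t. set (walk_edges t)) U"
  shows "\<exists>c'. closed_trail E c' \<and> set (walk_edges c') = set (walk_edges c) \<union> (\<Union>t\<in>U. set (walk_edges t))
     \<and> set c' = set c \<union> (\<Union>t\<in>U. set t)"
  using assms
proof (induction U rule: finite_induct)
  case empty then show ?case by auto
next
  case (insert t U)
  have dU: "set (walk_edges t) \<inter> (\<Union>t'\<in>U. set (walk_edges t')) = {}"
    and "disjoint_family_on (\<lambda>t. set (walk_edges t)) U"
    using insert.prems(3) insert.hyps(2) by (simp_all add: disjoint_family_on_insert)
  then obtain c'' where c'': "closed_trail E c''"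
    "set (walk_edges c'') = set (walk_edges c) \<union> (\<Union>t\<in>U. set (walk_edges t))"
    "set c'' = set c \<union> (\<Union>t\<in>U. set t)"
    using insert.IH insert.prems(1,2) by blast
  have t: "closed_trail E t" "set t \<inter> set c \<noteq> {}" "set (walk_edges t) \<inter> set (walk_edges c) = {}"
    using insert.prems(2) by auto
  obtain u where u: "u \<in> set t" "u \<in> set c" using t(2) by blast
  have "set (walk_edges c'') \<inter> set (walk_edges t) = {}" using c''(2) t(3) dU by blast
  then obtain zs where "closed_trail E zs" "set (walk_edges zs) = set (walk_edges c'') \<union> set (walk_edges t)"
    "set zs = set c'' \<union> set t"
    using closed_trail_splice[OF c''(1) t(1) _ u(1)] u(2) c''(3) by blast
  then show ?case using c'' by (intro exI[of _ zs]) auto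
qed

text \<open>The trails of the family that meet \<open>c\<close> are spliced into \<open>c\<close>.\<close>

lemma vertex_disjoint_insert_closed_trail:
  assumes TS: "finite TS" "\<forall>t\<in>TS. closed_trail E t"
    "disjoint_family_on (\<lambda>t. set (walk_edges t)) TS" "disjoint_family_on set TS"
    and c: "closed_trail E c" and dcTS: "\<And>t. t \<in> TS \<Longrightarrow> set (walk_edges t) \<inter> set (walk_edges c) = {}"
  obtains TS' where "finite TS'" "\<forall>t\<in>TS'. closed_trail E t"
    "disjoint_family_on (\<lambda>t. set (walk_edges t)) TS'" "disjoint_family_on set TS'"
    "(\<Union>t\<in>TS'. set (walk_edges t)) = set (walk_edges c) \<union> (\<Union>t\<in>TS. set (walk_edges t))"
    "(\<Union>t\<in>TS'. set t) = set c \<union> (\<Union>t\<in>TS. set t)"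
proof -
  define U where "U = {t\<in>TS. set t \<inter> set c \<noteq> {}}"
  have "finite U" and UTS: "U \<subseteq> TS" using TS(1) by (auto simp: U_def)
  have "closed_trail E t \<and> set t \<inter> set c \<noteq> {} \<and> set (walk_edges t) \<inter> set (walk_edges c) = {}"
    if "t \<in> U" for t
    using TS(2) dcTS that by (auto simp: U_def)
  moreover have "disjoint_family_on (\<lambda>t. set (walk_edges t)) U"
    by (rule disjoint_family_on_mono[OF UTS TS(3)])
  ultimately obtain c' where c': "closed_trail E c'"
    "set (walk_edges c') = set (walk_edges c) \<union> (\<Union>t\<in>U. set (walk_edges t))"
    "set c' = set c \<union> (\<Union>t\<in>U. set t)"
    using closed_trail_splice_all[OF \<open>finite U\<close> c] by blast
  have disj: "set (walk_edges c') \<inter> set (walk_edges t) = {} \<and> set c' \<inter> set t = {}"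
    if t: "t \<in> TS - U" for t
  proof -
    have U: "set (walk_edges t') \<inter> set (walk_edges t) = {} \<and> set t' \<inter> set t = {}" if "t' \<in> U" for t'
    proof -
      have "t' \<in> TS" "t' \<noteq> t" using that t UTS by auto
      then show ?thesis using TS(3,4) t unfolding disjoint_family_on_def by blast
    qed
    have "set (walk_edges c') \<inter> set (walk_edges t) = {}"
      unfolding c'(2) using U dcTS[of t] t by auto
    moreover have "set c' \<inter> set t = {}"
      unfolding c'(3) using U t by (auto simp: U_def)
    ultimately show ?thesis ..
  qed
  define TS' where "TS' = insert c' (TS - U)"
  have "disjoint_family_on (\<lambda>t. set (walk_edges t)) (TS - U)" "disjoint_family_on set (TS - U)"
    using disjoint_family_on_mono[OF Diff_subset TS(3)] disjoint_family_on_mono[OF Diff_subset TS(4)] .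
  then have dj: "disjoint_family_on (\<lambda>t. set (walk_edges t)) TS'" "disjoint_family_on set TS'"
    unfolding TS'_def using disj by (auto intro!: disjoint_family_on_insertI)
  have un: "(\<Union>t\<in>TS'. set (walk_edges t)) = set (walk_edges c) \<union> (\<Union>t\<in>TS. set (walk_edges t))"
    "(\<Union>t\<in>TS'. set t) = set c \<union> (\<Union>t\<in>TS. set t)"
    using c'(2,3) UTS by (auto simp: TS'_def)
  have "finite TS'" "\<forall>t\<in>TS'. closed_trail E t" using TS(1,2) c'(1) by (auto simp: TS'_def)
  then show thesis using dj un by (rule that)
qed

lemma vertex_disjoint_closed_trails:
  assumes "finite CS" "\<forall>c\<in>CS. closed_trail E c" "disjoint_family_on (\<lambda>c. set (walk_edges c)) CS"
  shows "\<exists>TS. finite TS \<and> (\<forall>t\<in>TS. closed_trail E t)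
    \<and> disjoint_family_on (\<lambda>t. set (walk_edges t)) TS \<and> disjoint_family_on set TS
    \<and> (\<Union>t\<in>TS. set (walk_edges t)) = (\<Union>c\<in>CS. set (walk_edges c)) \<and> (\<Union>t\<in>TS. set t) = (\<Union>c\<in>CS. set c)"
  using assms
proof (induction CS rule: finite_induct)
  case empty then show ?case by (intro exI[of _ "{}"]) (auto simp: disjoint_family_on_def)
next
  case (insert c CS)
  have dcCS: "set (walk_edges c) \<inter> (\<Union>c'\<in>CS. set (walk_edges c')) = {}"
    and "disjoint_family_on (\<lambda>c. set (walk_edges c)) CS"
    using insert.prems(2) insert.hyps(2) by (simp_all add: disjoint_family_on_insert)
  then obtain TS where TS: "finite TS" "\<forall>t\<in>TS. closed_trail E t"
    "disjoint_family_on (\<lambda>t. set (walk_edges t)) TS" "disjoint_family_on set TS"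
    "(\<Union>t\<in>TS. set (walk_edges t)) = (\<Union>c\<in>CS. set (walk_edges c))"
    "(\<Union>t\<in>TS. set t) = (\<Union>c\<in>CS. set c)"
    using insert.IH insert.prems(1) by auto
  have "closed_trail E c" using insert.prems(1) by simp
  moreover have "set (walk_edges t) \<inter> set (walk_edges c) = {}" if "t \<in> TS" for t
    using dcCS TS(5) that by blast
  ultimately obtain TS' where "finite TS'" "\<forall>t\<in>TS'. closed_trail E t"
    "disjoint_family_on (\<lambda>t. set (walk_edges t)) TS'" "disjoint_family_on set TS'"
    "(\<Union>t\<in>TS'. set (walk_edges t)) = set (walk_edges c) \<union> (\<Union>t\<in>TS. set (walk_edges t))"
    "(\<Union>t\<in>TS'. set t) = set c \<union> (\<Union>t\<in>TS. set t)"
    using vertex_disjoint_insert_closed_trail[OF TS(1-4)] by metis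
  then show ?case using TS(5,6) by (intro exI[of _ TS']) auto
qed

text \<open>The trails are disjoint in edges and in vertices, so one of them has at least the average density.\<close>

lemma closed_trail_above_average:
  assumes fin: "finite TS" and ct: "\<forall>t\<in>TS. closed_trail E t"
    and de: "disjoint_family_on (\<lambda>t. set (walk_edges t)) TS" and dv: "disjoint_family_on set TS"
    and sub: "(\<Union>t\<in>TS. set t) \<subseteq> V" and finV: "finite V"
    and pos: "0 < card (\<Union>t\<in>TS. set (walk_edges t))"
  shows "\<exists>t\<in>TS. card (\<Union>t\<in>TS. set (walk_edges t)) * card (set t) \<le> card V * length (walk_edges t)"
proof (rule ccontr)
  define S where "S = card (\<Union>t\<in>TS. set (walk_edges t))"
  assume "\<not> ?thesis"
  then have lt: "card V * length (walk_edges t) < S * card (set t)" if "t \<in> TS" for t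
    using that by (auto simp: S_def not_le)
  have ne: "TS \<noteq> {}" using pos by auto
  have s1: "(\<Sum>t\<in>TS. length (walk_edges t)) = S"
  proof -
    have "(\<Sum>t\<in>TS. length (walk_edges t)) = (\<Sum>t\<in>TS. card (set (walk_edges t)))"
      using ct by (intro sum.cong) (auto simp: closed_trail_def distinct_card)
    also have "\<dots> = S" unfolding S_def using de fin by (simp add: card_UN_disjoint')
    finally show ?thesis .
  qed
  have s2: "(\<Sum>t\<in>TS. card (set t)) \<le> card V"
  proof -
    have "(\<Sum>t\<in>TS. card (set t)) = card (\<Union>t\<in>TS. set t)" using dv fin by (simp add: card_UN_disjoint')
    also have "\<dots> \<le> card V" using sub finV by (rule card_mono[rotated])
    finally show ?thesis .
  qed
  have "card V * S = (\<Sum>t\<in>TS. card V * length (walk_edges t))"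
    unfolding s1[symmetric] by (simp add: sum_distrib_left)
  also have "\<dots> < (\<Sum>t\<in>TS. S * card (set t))" using fin ne lt by (intro sum_strict_mono) auto
  also have "\<dots> = S * (\<Sum>t\<in>TS. card (set t))" by (simp add: sum_distrib_left)
  also have "\<dots> \<le> S * card V" using s2 by simp
  finally show False by simp
qed

lemma dense_closed_trail_exists:
  fixes E :: "nat set set"
  assumes fE: "finite E" and two: "\<forall>e\<in>E. card e = 2" and sub: "\<Union>E \<subseteq> V" and finV: "finite V"
    and big: "card V < card E"
  shows "\<exists>ws. closed_trail E ws \<and> (card E - card V) * card (set ws) \<le> card V * length (walk_edges ws)"
proof -
  obtain CS where CS: "finite CS" "\<forall>c\<in>CS. closed_trail E c"
    "disjoint_family_on (\<lambda>c. set (walk_edges c)) CS"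
    "card E \<le> card (\<Union>c\<in>CS. set (walk_edges c)) + card (\<Union>E)"
    using closed_trail_decomposition[OF fE two] by blast
  obtain TS where TS: "finite TS" "\<forall>t\<in>TS. closed_trail E t"
    "disjoint_family_on (\<lambda>t. set (walk_edges t)) TS" "disjoint_family_on set TS"
    "(\<Union>t\<in>TS. set (walk_edges t)) = (\<Union>c\<in>CS. set (walk_edges c))"
    "(\<Union>t\<in>TS. set t) = (\<Union>c\<in>CS. set c)"
    using vertex_disjoint_closed_trails[OF CS(1-3)] by metis
  define S where "S = card (\<Union>t\<in>TS. set (walk_edges t))"
  have "card (\<Union>E) \<le> card V" using sub finV by (rule card_mono[rotated])
  then have SS: "card E - card V \<le> S" using CS(4) TS(5) by (simp add: S_def)
  then have pos: "0 < S" using big by simp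
  have vs: "(\<Union>t\<in>TS. set t) \<subseteq> V"
  proof -
    have "set c \<subseteq> V" if "c \<in> CS" for c
    proof -
      have "2 \<le> length c" "set (walk_edges c) \<subseteq> E" using CS(2) that by (auto simp: closed_trail_def)
      then show ?thesis using set_subset_Union_walk_edges[of c] sub by blast
    qed
    then show ?thesis using TS(6) by auto
  qed
  obtain t where t: "t \<in> TS" "S * card (set t) \<le> card V * length (walk_edges t)"
    using closed_trail_above_average[OF TS(1-4) vs finV pos[unfolded S_def]] unfolding S_def by blast
  have "(card E - card V) * card (set t) \<le> S * card (set t)" using SS by (rule mult_right_mono) simp
  then have "(card E - card V) * card (set t) \<le> card V * length (walk_edges t)" using t(2) by linarith
  then show ?thesis using t(1) TS(2) by blast
qed


definition tour_edge :: "(nat \<Rightarrow> nat) \<Rightarrow> nat \<Rightarrow> nat \<Rightarrow> nat set" where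
  "tour_edge \<sigma> n i = {\<sigma> i, \<sigma> (Suc i mod n)}"

lemma is_tour_iff:
  "is_tour n T \<longleftrightarrow> 3 \<le> n \<and> (\<exists>\<sigma>. bij_betw \<sigma> {0..<n} {0..<n} \<and> T = tour_edge \<sigma> n ` {0..<n})"
  unfolding is_tour_def tour_edge_def by (simp add: setcompr_eq_image atLeast0LessThan lessThan_def)

lemma is_tourE:
  assumes "is_tour n T"
  obtains \<sigma> where "3 \<le> n" "bij_betw \<sigma> {0..<n} {0..<n}" "T = tour_edge \<sigma> n ` {0..<n}"
  using assms unfolding is_tour_iff by blast

lemma is_tourI: "3 \<le> n \<Longrightarrow> bij_betw \<sigma> {0..<n} {0..<n} \<Longrightarrow> is_tour n (tour_edge \<sigma> n ` {0..<n})"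
  unfolding is_tour_iff by blast

lemma finite_tour: "is_tour n T \<Longrightarrow> finite T"
  by (auto elim: is_tourE)

lemma inj_on_tour_edge: "3 \<le> n \<Longrightarrow> inj_on \<sigma> {0..<n} \<Longrightarrow> inj_on (tour_edge \<sigma> n) {0..<n}"
  unfolding tour_edge_def[abs_def] by (rule inj_on_cycle_edges)

lemma tour_cost_eq_sum:
  assumes "3 \<le> n" "bij_betw \<sigma> {0..<n} {0..<n}"
  shows "tour_cost w (tour_edge \<sigma> n ` {0..<n}) = (\<Sum>i<n. w (tour_edge \<sigma> n i))"
proof -
  have "inj_on \<sigma> {0..<n}" using assms(2) by (simp add: bij_betw_def)
  then have "inj_on (tour_edge \<sigma> n) {0..<n}" using inj_on_tour_edge assms(1) by blast
  then show ?thesis unfolding tour_cost_def by (simp add: sum.reindex atLeast0LessThan)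
qed

lemma card_tour_edges:
  assumes "3 \<le> n" "bij_betw \<sigma> {0..<n} {0..<n}"
  shows "card (tour_edge \<sigma> n ` {0..<n}) = n"
proof -
  have "inj_on \<sigma> {0..<n}" using assms(2) by (simp add: bij_betw_def)
  then have "inj_on (tour_edge \<sigma> n) {0..<n}" using inj_on_tour_edge assms(1) by blast
  then show ?thesis by (simp add: card_image)
qed

lemma tour_edge_props:
  assumes "3 \<le> n" "bij_betw \<sigma> {0..<n} {0..<n}" "i < n"
  shows "\<sigma> i < n" "\<sigma> (Suc i mod n) < n" "\<sigma> i \<noteq> \<sigma> (Suc i mod n)"
proof -
  have inj: "inj_on \<sigma> {0..<n}" and im: "\<sigma> ` {0..<n} = {0..<n}" using assms(2) by (auto simp: bij_betw_def)
  have s: "Suc i mod n < n" using assms by simp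
  show "\<sigma> i < n" "\<sigma> (Suc i mod n) < n" using im assms(3) s by auto
  have "i \<noteq> Suc i mod n" using assms(1,3) by (auto simp: Suc_mod_if)
  then show "\<sigma> i \<noteq> \<sigma> (Suc i mod n)" using inj assms(3) s by (auto dest: inj_onD)
qed

lemma is_tour_edgeD:
  assumes "is_tour n T" "e \<in> T"
  shows "\<exists>p q. e = {p, q} \<and> p \<noteq> q \<and> p < n \<and> q < n"
proof -
  obtain \<sigma> where s: "3 \<le> n" "bij_betw \<sigma> {0..<n} {0..<n}" "T = tour_edge \<sigma> n ` {0..<n}"
    using is_tourE[OF assms(1)] by blast
  then obtain i where "i < n" "e = tour_edge \<sigma> n i" using assms(2) by auto
  then show ?thesis using tour_edge_props[OF s(1,2) \<open>i < n\<close>] unfolding tour_edge_def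
    by (intro exI[of _ "\<sigma> i"] exI[of _ "\<sigma> (Suc i mod n)"]) simp
qed

lemma degree_tour:
  assumes "is_tour n T" "p < n"
  shows "degree T p = 2"
proof -
  obtain \<sigma> where s: "3 \<le> n" "bij_betw \<sigma> {0..<n} {0..<n}" "T = tour_edge \<sigma> n ` {0..<n}"
    using is_tourE[OF assms(1)] by blast
  have inj: "inj_on \<sigma> {0..<n}" and im: "\<sigma> ` {0..<n} = {0..<n}" using s(2) by (auto simp: bij_betw_def)
  have "p \<in> \<sigma> ` {0..<n}" using im assms(2) by simp
  then obtain j where j: "j < n" "\<sigma> j = p" by (elim imageE) auto
  define j' where "j' = (if j = 0 then n - 1 else j - 1)"
  have j': "j' < n" "Suc j' mod n = j" using s(1) j(1) by (auto simp: j'_def)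
  have jj: "j \<noteq> j'" using s(1) j by (auto simp: j'_def)
  have "{e\<in>T. p \<in> e} = {tour_edge \<sigma> n j, tour_edge \<sigma> n j'}"
  proof (intro equalityI subsetI)
    fix e assume "e \<in> {e\<in>T. p \<in> e}"
    then obtain i where i: "i < n" "e = tour_edge \<sigma> n i" "p \<in> e" using s(3) by auto
    have si: "Suc i mod n < n" using i by simp
    from i have "\<sigma> i = \<sigma> j \<or> \<sigma> (Suc i mod n) = \<sigma> j" using j by (auto simp: tour_edge_def)
    then have "i = j \<or> Suc i mod n = j" using inj i(1) si j(1) by (auto dest: inj_onD)
    then have "i = j \<or> i = j'"
    proof
      assume "Suc i mod n = j"
      then show ?thesis using i(1) s(1) by (auto simp: j'_def Suc_mod_if split: if_splits)
    qed simp
    then show "e \<in> {tour_edge \<sigma> n j, tour_edge \<sigma> n j'}" using i by auto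
  next
    fix e assume "e \<in> {tour_edge \<sigma> n j, tour_edge \<sigma> n j'}"
    then show "e \<in> {e\<in>T. p \<in> e}" using s(3) j j' by (auto simp: tour_edge_def)
  qed
  moreover have "tour_edge \<sigma> n j \<noteq> tour_edge \<sigma> n j'"
    using inj_onD[OF inj_on_tour_edge[OF s(1) inj], of j j'] j j' jj by auto
  ultimately show ?thesis by (simp add: degree_def)
qed

lemma degree_tour_diff:
  assumes T: "is_tour n T" and T': "is_tour n T'" and p: "p < n"
  shows "degree (T - T') p = degree (T' - T) p"
proof -
  have "{e\<in>T. p \<in> e} = {e\<in>T \<inter> T'. p \<in> e} \<union> {e\<in>T - T'. p \<in> e}"
    "{e\<in>T'. p \<in> e} = {e\<in>T \<inter> T'. p \<in> e} \<union> {e\<in>T' - T. p \<in> e}" by auto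
  then have "degree T p = card {e\<in>T \<inter> T'. p \<in> e} + degree (T - T') p"
    "degree T' p = card {e\<in>T \<inter> T'. p \<in> e} + degree (T' - T) p"
    using finite_tour[OF T] finite_tour[OF T'] unfolding degree_def
    by (simp_all add: card_Un_disjoint disjoint_iff)
  then show ?thesis using degree_tour[OF T p] degree_tour[OF T' p] by simp
qed

lemma sum_card_filter_eq_sum_degree:
  assumes "finite X" "finite P" "\<forall>e\<in>X. e \<subseteq> P"
  shows "(\<Sum>e\<in>X. card {p\<in>e. Q p}) = (\<Sum>p\<in>{p\<in>P. Q p}. degree X p)"
proof -
  have "(\<Sum>e\<in>X. card {p\<in>e. Q p}) = (\<Sum>e\<in>X. \<Sum>p\<in>P. if p \<in> e \<and> Q p then 1 else 0)"
  proof (rule sum.cong)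
    fix e assume "e \<in> X"
    then have "{p\<in>e. Q p} = {p\<in>P. p \<in> e \<and> Q p}" using assms(3) by auto
    then show "card {p\<in>e. Q p} = (\<Sum>p\<in>P. if p \<in> e \<and> Q p then 1 else 0)"
      using assms(2) by (simp add: sum.inter_filter[symmetric])
  qed simp
  also have "\<dots> = (\<Sum>p\<in>P. \<Sum>e\<in>X. if p \<in> e \<and> Q p then 1 else 0)" by (rule sum.swap)
  also have "\<dots> = (\<Sum>p\<in>P. if Q p then degree X p else 0)"
    using assms(1) by (intro sum.cong) (simp_all add: degree_def sum.inter_filter[symmetric])
  also have "\<dots> = (\<Sum>p\<in>{p\<in>P. Q p}. degree X p)"
    using assms(2) by (simp add: sum.inter_filter)
  finally show ?thesis .
qed

text \<open>Double counting: both sides count the edge ends in \<open>Q\<close>, and every position has the same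
  degree in \<open>T - T'\<close> as in \<open>T' - T\<close>.\<close>

lemma sum_card_filter_tour_diff:
  assumes T: "is_tour n T" and T': "is_tour n T'"
  shows "(\<Sum>r\<in>T - T'. card {p\<in>r. Q p}) = (\<Sum>a\<in>T' - T. card {p\<in>a. Q p})"
proof -
  have sub: "\<forall>e\<in>S. e \<subseteq> {0..<n}" if "is_tour n S" for S
    using is_tour_edgeD[OF that] by fastforce
  have "(\<Sum>r\<in>T - T'. card {p\<in>r. Q p}) = (\<Sum>p\<in>{p\<in>{0..<n}. Q p}. degree (T - T') p)"
    using finite_tour[OF T] sub[OF T] by (intro sum_card_filter_eq_sum_degree) auto
  also have "\<dots> = (\<Sum>p\<in>{p\<in>{0..<n}. Q p}. degree (T' - T) p)"
    using degree_tour_diff[OF T T'] by (intro sum.cong) auto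
  also have "\<dots> = (\<Sum>a\<in>T' - T. card {p\<in>a. Q p})"
    using finite_tour[OF T'] sub[OF T'] by (intro sum_card_filter_eq_sum_degree[symmetric]) auto
  finally show ?thesis .
qed

lemma finite_tours: "finite {T. is_tour n T}"
proof (rule finite_subset)
  show "{T. is_tour n T} \<subseteq> Pow (Pow {0..<n})"
  proof
    fix T assume "T \<in> {T. is_tour n T}"
    then have "\<forall>e\<in>T. e \<subseteq> {0..<n}" using is_tour_edgeD[of n T] by fastforce
    then show "T \<in> Pow (Pow {0..<n})" by auto
  qed
qed simp

lemma is_tour_identity: "3 \<le> n \<Longrightarrow> is_tour n (tour_edge id n ` {0..<n})"
  by (rule is_tourI) auto

lemma finite_tour_costs: "finite {tour_cost w T | T. is_tour n T}"
  using finite_tours[of n] by (simp add: setcompr_eq_image)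

lemma OPT_attained:
  assumes "3 \<le> n"
  obtains T where "is_tour n T" "OPT n w = tour_cost w T"
proof -
  have ne: "{tour_cost w T | T. is_tour n T} \<noteq> {}" using is_tour_identity[OF assms] by blast
  have "OPT n w \<in> {tour_cost w T | T. is_tour n T}"
    unfolding OPT_def using cInf_eq_Min[OF finite_tour_costs ne] Min_in[OF finite_tour_costs ne] by simp
  then show thesis using that by blast
qed

lemma OPT_le_tour_cost: "is_tour n T \<Longrightarrow> OPT n w \<le> tour_cost w T"
  unfolding OPT_def using finite_tour_costs by (intro cInf_lower) (auto intro: bdd_below_finite)

lemma metric_instance_triangle:
  "metric_instance n w \<Longrightarrow> u < n \<Longrightarrow> v < n \<Longrightarrow> x < n \<Longrightarrow> u \<noteq> v \<Longrightarrow> u \<noteq> x \<Longrightarrow> v \<noteq> x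
   \<Longrightarrow> w {u, v} \<le> w {u, x} + w {x, v}"
  unfolding metric_instance_def by blast

lemma metric_instance_nonneg:
  "metric_instance n w \<Longrightarrow> u < n \<Longrightarrow> v < n \<Longrightarrow> u \<noteq> v \<Longrightarrow> 0 \<le> w {u, v}"
  unfolding metric_instance_def by blast

lemma metric_le_path_cost:
  assumes mi: "metric_instance n w" and n3: "3 \<le> n" and bij: "bij_betw \<sigma> {0..<n} {0..<n}"
  shows "a < b \<Longrightarrow> b < n \<Longrightarrow> w {\<sigma> a, \<sigma> b} \<le> (\<Sum>i\<in>{a..<b}. w {\<sigma> i, \<sigma> (Suc i)})"
proof (induction b)
  case 0 then show ?case by simp
next
  case (Suc b)
  have inj: "inj_on \<sigma> {0..<n}" and im: "\<sigma> ` {0..<n} = {0..<n}" using bij by (auto simp: bij_betw_def)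
  have lt: "\<And>i. i < n \<Longrightarrow> \<sigma> i < n" using im by auto
  show ?case
  proof (cases "a = b")
    case True then show ?thesis by simp
  next
    case False
    then have ab: "a < b" using Suc.prems by simp
    have IH: "w {\<sigma> a, \<sigma> b} \<le> (\<Sum>i\<in>{a..<b}. w {\<sigma> i, \<sigma> (Suc i)})" using Suc.IH ab Suc.prems by simp
    have d1: "\<sigma> a \<noteq> \<sigma> (Suc b)" "\<sigma> a \<noteq> \<sigma> b" "\<sigma> (Suc b) \<noteq> \<sigma> b"
      using inj ab Suc.prems by (auto dest!: inj_onD)
    have "w {\<sigma> a, \<sigma> (Suc b)} \<le> w {\<sigma> a, \<sigma> b} + w {\<sigma> b, \<sigma> (Suc b)}"
      using metric_instance_triangle[OF mi lt lt lt d1] ab Suc.prems by simp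
    also have "\<dots> \<le> (\<Sum>i\<in>{a..<b}. w {\<sigma> i, \<sigma> (Suc i)}) + w {\<sigma> b, \<sigma> (Suc b)}" using IH by simp
    also have "\<dots> = (\<Sum>i\<in>{a..<Suc b}. w {\<sigma> i, \<sigma> (Suc i)})" using ab by simp
    finally show ?thesis .
  qed
qed

lemma metric_le_tour_cost:
  assumes mi: "metric_instance n w" and t: "is_tour n T" and uv: "u < n" "v < n" "u \<noteq> v"
  shows "w {u, v} \<le> tour_cost w T"
proof -
  obtain \<sigma> where s: "3 \<le> n" "bij_betw \<sigma> {0..<n} {0..<n}" "T = tour_edge \<sigma> n ` {0..<n}"
    using is_tourE[OF t] by blast
  have im: "\<sigma> ` {0..<n} = {0..<n}" using s(2) by (auto simp: bij_betw_def)
  have nn: "0 \<le> w (tour_edge \<sigma> n i)" if "i < n" for i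
    using metric_instance_nonneg[OF mi tour_edge_props[OF s(1,2) that]] by (simp add: tour_edge_def)
  have key: "w {\<sigma> a, \<sigma> b} \<le> tour_cost w T" if ab: "a < b" "b < n" for a b
  proof -
    have "w {\<sigma> a, \<sigma> b} \<le> (\<Sum>i\<in>{a..<b}. w {\<sigma> i, \<sigma> (Suc i)})"
      by (rule metric_le_path_cost[OF mi s(1,2) ab])
    also have "\<dots> = (\<Sum>i\<in>{a..<b}. w (tour_edge \<sigma> n i))"
      using ab by (intro sum.cong) (auto simp: tour_edge_def)
    also have "\<dots> \<le> (\<Sum>i\<in>{0..<n}. w (tour_edge \<sigma> n i))"
      using ab nn by (intro sum_mono2) auto
    also have "\<dots> = tour_cost w T" using tour_cost_eq_sum[OF s(1,2)] s(3) by (simp add: atLeast0LessThan)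
    finally show ?thesis .
  qed
  obtain a where a: "a < n" "\<sigma> a = u" using im uv(1) by (metis atLeastLessThan_iff imageE zero_le)
  obtain b where b: "b < n" "\<sigma> b = v" using im uv(2) by (metis atLeastLessThan_iff imageE zero_le)
  have "a \<noteq> b" using a b uv by auto
  then consider "a < b" | "b < a" by linarith
  then show ?thesis
  proof cases
    case 1 then show ?thesis using key[of a b] a b by simp
  next
    case 2 then show ?thesis using key[of b a] a b by (simp add: insert_commute)
  qed
qed

text \<open>This crude bound is what makes the ratios bounded, so that \<open>alpha\<close> is a genuine supremum.\<close>

lemma tour_cost_le_n_OPT:
  assumes mi: "metric_instance n w" and t: "is_tour n T"
  shows "tour_cost w T \<le> real n * OPT n w"
proof -
  have n3: "3 \<le> n" using t by (simp add: is_tour_def)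
  obtain T0 where T0: "is_tour n T0" "OPT n w = tour_cost w T0" using OPT_attained[OF n3] by blast
  obtain \<sigma> where s: "3 \<le> n" "bij_betw \<sigma> {0..<n} {0..<n}" "T = tour_edge \<sigma> n ` {0..<n}"
    using is_tourE[OF t] by blast
  have "tour_cost w T = (\<Sum>e\<in>T. w e)" by (simp add: tour_cost_def)
  also have "\<dots> \<le> (\<Sum>e\<in>T. tour_cost w T0)"
  proof (rule sum_mono)
    fix e assume "e \<in> T"
    then obtain p q where "e = {p, q}" "p \<noteq> q" "p < n" "q < n" using is_tour_edgeD[OF t] by blast
    then show "w e \<le> tour_cost w T0" using metric_le_tour_cost[OF mi T0(1)] by simp
  qed
  also have "\<dots> = real n * OPT n w" using card_tour_edges[OF s(1,2)] s(3) T0(2) by simp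
  finally show ?thesis .
qed

lemma ratio_le_alpha:
  assumes mi: "metric_instance n w" and pos: "OPT n w > 0" and ko: "k_optimal k n w T"
  shows "tour_cost w T / OPT n w \<le> alpha k n"
  unfolding alpha_def
proof (rule cSup_upper)
  show "tour_cost w T / OPT n w \<in> {tour_cost w T / OPT n w |w T. metric_instance n w \<and> OPT n w > 0 \<and> k_optimal k n w T}"
    using assms by blast
  show "bdd_above {tour_cost w T / OPT n w |w T. metric_instance n w \<and> OPT n w > 0 \<and> k_optimal k n w T}"
  proof (rule bdd_aboveI)
    fix x assume "x \<in> {tour_cost w T / OPT n w |w T. metric_instance n w \<and> OPT n w > 0 \<and> k_optimal k n w T}"
    then obtain w' T' where x: "x = tour_cost w' T' / OPT n w'" "metric_instance n w'" "OPT n w' > 0"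
      "k_optimal k n w' T'" by blast
    have "is_tour n T'" using x(4) by (simp add: k_optimal_def)
    then have "tour_cost w' T' \<le> real n * OPT n w'" using tour_cost_le_n_OPT x(2) by blast
    then show "x \<le> real n" using x(1,3) by (simp add: divide_le_eq)
  qed
qed


section \<open>Edge multisets with even degrees\<close>

lemma even_sum_plus_card_odd:
  assumes "finite S"
  shows "even ((\<Sum>e\<in>S. c e) + card {e\<in>S. odd (c e :: nat)})"
  using assms
proof (induction S rule: finite_induct)
  case empty then show ?case by simp
next
  case (insert x S)
  have "{e \<in> insert x S. odd (c e)} = (if odd (c x) then insert x {e\<in>S. odd (c e)} else {e\<in>S. odd (c e)})"
    by auto
  then have "card {e \<in> insert x S. odd (c e)}
      = (if odd (c x) then Suc (card {e\<in>S. odd (c e)}) else card {e\<in>S. odd (c e)})"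
    using insert by auto
  then show ?case using insert by auto
qed

lemma card_filter_doubleton:
  assumes "p \<noteq> q"
  shows "card {x\<in>{p, q}. Q x} = (if Q p then 1 else 0) + (if Q q then 1 else 0)"
proof -
  have "{x\<in>{p, q}. Q x} = (if Q p then {p} else {}) \<union> (if Q q then {q} else {})" by auto
  then show ?thesis using assms by (auto simp: card_insert_if)
qed

lemma size_filter_mset_eq_sum_count:
  "size (filter_mset P M) = (\<Sum>e\<in>{e\<in>set_mset M. P e}. count M e)"
  by (simp add: size_multiset_overloaded_eq)

lemma card_set_mset_le_size: "card (set_mset M) \<le> size M"
proof -
  have "card (set_mset M) = (\<Sum>e\<in>set_mset M. 1)" by simp
  also have "\<dots> \<le> (\<Sum>e\<in>set_mset M. count M e)" by (intro sum_mono) auto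
  finally show ?thesis by (simp add: size_multiset_overloaded_eq)
qed

lemma filter_mset_sum: "filter_mset P (\<Sum>x\<in>A. f x) = (\<Sum>x\<in>A. filter_mset P (f x))"
  by (induction A rule: infinite_finite_induct) auto

text \<open>The edges of odd multiplicity form a graph without vertices of degree one, which would
  contain a cycle no longer than \<open>M\<close>.\<close>

lemma even_count_if_size_below_girth:
  fixes M :: "nat set multiset"
  assumes sub: "set_mset M \<subseteq> E" and two: "\<forall>e\<in>E. card e = 2"
    and girth: "\<forall>l. has_cycle_of_length E l \<longrightarrow> g \<le> l" and small: "size M < g"
    and even: "\<And>v. even (size (filter_mset (\<lambda>e. v \<in> e) M))"
  shows "even (count M e)"
proof (rule ccontr)
  define F where "F = {e\<in>set_mset M. odd (count M e)}"
  assume "odd (count M e)"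
  then have "0 < count M e" by (rule odd_pos)
  then have "F \<noteq> {}" using \<open>odd (count M e)\<close> by (auto simp: F_def)
  moreover have "degree F v \<noteq> 1" for v
  proof -
    have "even ((\<Sum>e\<in>{e\<in>set_mset M. v \<in> e}. count M e)
        + card {e\<in>{e\<in>set_mset M. v \<in> e}. odd (count M e)})"
      by (rule even_sum_plus_card_odd) simp
    moreover have "{e\<in>{e\<in>set_mset M. v \<in> e}. odd (count M e)} = {e\<in>F. v \<in> e}"
      by (auto simp: F_def)
    ultimately have "even (size (filter_mset (\<lambda>e. v \<in> e) M) + degree F v)"
      by (simp add: size_filter_mset_eq_sum_count degree_def)
    then show ?thesis using even[of v] by auto
  qed
  moreover have FE: "F \<subseteq> E" using sub by (auto simp: F_def)
  ultimately obtain l where l: "has_cycle_of_length F l"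
    using has_cycle_if_no_degree_one[of F] two by (auto simp: F_def)
  have "l \<le> card F" using l by (intro has_cycle_of_length_le_card) (auto simp: F_def)
  also have "\<dots> \<le> card (set_mset M)" by (rule card_mono) (auto simp: F_def)
  also have "\<dots> < g" using card_set_mset_le_size small by (rule le_less_trans)
  finally show False using girth has_cycle_of_length_mono[OF l FE] by fastforce
qed


section \<open>Distances truncated at \<open>K\<close>\<close>

definition walk :: "nat set set \<Rightarrow> nat list \<Rightarrow> nat \<Rightarrow> nat \<Rightarrow> nat \<Rightarrow> bool" where
  "walk E ws u v l \<longleftrightarrow> ws \<noteq> [] \<and> set (walk_edges ws) \<subseteq> E \<and> hd ws = u \<and> last ws = v \<and> length ws = Suc l"

definition trunc_dist :: "nat set set \<Rightarrow> nat \<Rightarrow> nat \<Rightarrow> nat \<Rightarrow> nat" where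
  "trunc_dist E K u v = (LEAST l. l = K \<or> (\<exists>ws. walk E ws u v l))"

lemma trunc_dist_le: "trunc_dist E K u v \<le> K"
  unfolding trunc_dist_def by (rule Least_le) simp

lemma trunc_dist_self: "trunc_dist E K u u = 0"
proof -
  have "walk E [u] u u 0" by (simp add: walk_def)
  then show ?thesis unfolding trunc_dist_def by (intro Least_eq_0) blast
qed

lemma trunc_dist_walk: assumes "trunc_dist E K u v < K" shows "\<exists>ws. walk E ws u v (trunc_dist E K u v)"
proof -
  have "trunc_dist E K u v = K \<or> (\<exists>ws. walk E ws u v (trunc_dist E K u v))"
    unfolding trunc_dist_def by (rule LeastI[of _ K]) simp
  then show ?thesis using assms by simp
qed

lemma trunc_dist_le_walk: "walk E ws u v l \<Longrightarrow> trunc_dist E K u v \<le> l"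
  unfolding trunc_dist_def by (rule Least_le) blast

lemma trunc_dist_pos: assumes "u \<noteq> v" "1 \<le> K" shows "1 \<le> trunc_dist E K u v"
proof (rule ccontr)
  assume "\<not> ?thesis"
  then have z: "trunc_dist E K u v = 0" by simp
  then have "trunc_dist E K u v < K" using assms by simp
  then obtain ws where "walk E ws u v 0" using trunc_dist_walk z by fastforce
  then show False using assms(1) by (cases ws) (auto simp: walk_def)
qed

lemma trunc_dist_edge: assumes "{u, v} \<in> E" shows "trunc_dist E K u v \<le> 1"
proof -
  have "walk E [u, v] u v 1" using assms by (simp add: walk_def)
  then show ?thesis by (rule trunc_dist_le_walk)
qed

lemma trunc_dist_sym_le: "trunc_dist E K u v \<le> trunc_dist E K v u"
proof (cases "trunc_dist E K v u < K")
  case True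
  then obtain ws where ws: "walk E ws v u (trunc_dist E K v u)" using trunc_dist_walk by blast
  then have "walk E (rev ws) u v (trunc_dist E K v u)"
    by (auto simp: walk_def walk_edges_rev hd_rev last_rev)
  then show ?thesis by (rule trunc_dist_le_walk)
next
  case False then show ?thesis using trunc_dist_le[of E K u v] by simp
qed

lemma trunc_dist_sym: "trunc_dist E K u v = trunc_dist E K v u"
  using trunc_dist_sym_le[of E K u v] trunc_dist_sym_le[of E K v u] by simp

lemma trunc_dist_triangle: "trunc_dist E K u v \<le> trunc_dist E K u x + trunc_dist E K x v"
proof (cases "trunc_dist E K u x < K \<and> trunc_dist E K x v < K")
  case True
  then obtain ws1 ws2 where w1: "walk E ws1 u x (trunc_dist E K u x)" and w2: "walk E ws2 x v (trunc_dist E K x v)"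
    using trunc_dist_walk by blast
  define ws where "ws = ws1 @ tl ws2"
  have ne: "ws1 \<noteq> []" "ws2 \<noteq> []" using w1 w2 by (auto simp: walk_def)
  have l1: "last ws1 = hd ws2" using w1 w2 by (simp add: walk_def)
  have "walk_edges ws = walk_edges ws1 @ walk_edges (last ws1 # tl ws2)"
    unfolding ws_def by (rule walk_edges_append[OF ne(1)])
  also have "last ws1 # tl ws2 = ws2" using l1 ne(2) by simp
  finally have pe: "walk_edges ws = walk_edges ws1 @ walk_edges ws2" .
  have lst: "last ws = v"
  proof (cases "tl ws2 = []")
    case True
    then have "ws2 = [hd ws2]" using ne(2) by (cases ws2) auto
    then show ?thesis using w2 l1 w1 by (auto simp: ws_def walk_def True)
  next
    case False
    then show ?thesis using w2 by (simp add: ws_def walk_def last_tl)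
  qed
  have "walk E ws u v (trunc_dist E K u x + trunc_dist E K x v)"
    using w1 w2 pe lst ne by (auto simp: walk_def ws_def)
  then show ?thesis by (rule trunc_dist_le_walk)
next
  case False
  then show ?thesis using trunc_dist_le[of E K u v] by auto
qed

lemma sum_sorted_adjacent_le:
  fixes f :: "'a \<Rightarrow> nat" and g :: "nat \<Rightarrow> nat \<Rightarrow> nat"
  assumes g0: "\<And>a. g a a = 0" and gk: "\<And>a b. g a b \<le> K"
  shows "sorted (map f xs) \<Longrightarrow> (\<Sum>i<length xs - 1. g (f (xs ! i)) (f (xs ! Suc i))) \<le> K * (card (f ` set xs) - 1)"
proof (induction xs)
  case Nil then show ?case by simp
next
  case (Cons x xs)
  show ?case
  proof (cases xs)
    case Nil then show ?thesis by simp
  next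
    case (Cons y ys)
    have IH: "(\<Sum>i<length xs - 1. g (f (xs ! i)) (f (xs ! Suc i))) \<le> K * (card (f ` set xs) - 1)"
      using Cons.IH Cons.prems by simp
    have split: "(\<Sum>i<length (x # xs) - 1. g (f ((x # xs) ! i)) (f ((x # xs) ! Suc i)))
        = g (f x) (f y) + (\<Sum>i<length xs - 1. g (f (xs ! i)) (f (xs ! Suc i)))"
      using Cons by (simp add: sum.lessThan_Suc_shift del: sum.lessThan_Suc)
    have c1: "card (f ` set xs) \<ge> 1" using Cons by (simp add: card_gt_0_iff Suc_le_eq)
    show ?thesis
    proof (cases "f x = f y")
      case True
      then have "f ` set (x # xs) = f ` set xs" using Cons by auto
      then show ?thesis using split IH True g0 by simp
    next
      case False
      have srt: "sorted (map f (x # xs))" by (fact Cons.prems)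
      have "f x \<le> f y" using srt Cons by simp
      then have lt: "f x < f y" using False by simp
      have fy: "\<forall>z\<in>set xs. f y \<le> f z" using Cons.prems Cons by auto
      have "f x \<notin> f ` set xs"
      proof
        assume "f x \<in> f ` set xs"
        then obtain z where "z \<in> set xs" "f z = f x" by auto
        then show False using fy lt by fastforce
      qed
      then have cc: "card (f ` set (x # xs)) = Suc (card (f ` set xs))" by simp
      have "K * (card (f ` set xs) - 1) + K = K * card (f ` set xs)" using c1
        by (cases "card (f ` set xs)") auto
      then show ?thesis using split IH gk[of "f x" "f y"] cc by simp
    qed
  qed
qed


section \<open>The instance built from a closed trail\<close>

text \<open>Tour positions \<open>0..<L\<close> follow the closed trail \<open>ws\<close> with \<open>L\<close> edges; the surplus positions
  all sit at its first vertex.\<close>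

locale trail_instance =
  fixes E :: "nat set set" and k :: nat and ws :: "nat list" and n :: nat
  assumes two: "\<forall>e\<in>E. card e = 2"
    and girth: "\<forall>l. has_cycle_of_length E l \<longrightarrow> 2 * k \<le> l"
    and k1: "1 \<le> k" and ct: "closed_trail E ws" and nL: "length ws - 1 \<le> n" and n3: "3 \<le> n"
begin

definition L :: nat where "L = length ws - 1"
definition loc :: "nat \<Rightarrow> nat" where "loc i = (if i < L then ws ! i else hd ws)"
definition w :: "nat set \<Rightarrow> real" where "w e = real (trunc_dist E k (loc (Min e)) (loc (Max e)))"
definition T0 :: "nat set set" where "T0 = tour_edge id n ` {0..<n}"
definition trail_pairs :: "nat set set" where "trail_pairs = {{i, Suc i mod n} | i. i < L}"

lemma length_ws: "length ws = Suc L" using ct by (auto simp: L_def closed_trail_def)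

lemma hd_ws: "hd ws = ws ! 0" using length_ws by (cases ws) auto

lemma last_ws: "ws ! L = hd ws"
proof -
  have "last ws = ws ! L" using length_ws by (subst last_conv_nth) auto
  then show ?thesis using ct by (simp add: closed_trail_def)
qed

lemma ws_edge: "i < L \<Longrightarrow> {ws ! i, ws ! Suc i} \<in> E"
proof -
  assume "i < L"
  then have "{ws ! i, ws ! Suc i} \<in> set (walk_edges ws)" unfolding set_walk_edges using length_ws by auto
  then show ?thesis using ct by (auto simp: closed_trail_def)
qed

lemma ws_edge_neq: "i < L \<Longrightarrow> ws ! i \<noteq> ws ! Suc i"
  using ws_edge two by fastforce

lemma L_ge_2: "2 \<le> L"
proof -
  have "1 \<le> L" using ct by (auto simp: closed_trail_def L_def)
  moreover have "L \<noteq> 1"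
  proof
    assume "L = 1"
    then have "ws ! 0 \<noteq> ws ! 1" using ws_edge_neq[of 0] by simp
    then show False using last_ws hd_ws \<open>L = 1\<close> by simp
  qed
  ultimately show ?thesis by simp
qed

lemma L_le_n: "L \<le> n" using nL by (simp add: L_def)

lemma loc_less: "i < L \<Longrightarrow> loc i = ws ! i"
  by (simp add: loc_def)

lemma loc_suc: "i < L \<Longrightarrow> loc (Suc i mod n) = ws ! Suc i"
proof -
  assume i: "i < L"
  show ?thesis
  proof (cases "Suc i < n")
    case True
    then have sm: "Suc i mod n = Suc i" by simp
    show ?thesis
    proof (cases "Suc i < L")
      case True then show ?thesis using sm by (simp add: loc_def)
    next
      case False
      then have "Suc i = L" using i by simp
      then show ?thesis using sm last_ws by (simp add: loc_def)
    qed
  next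
    case False
    then have "Suc i = n" "Suc i = L" using i L_le_n by auto
    then show ?thesis using last_ws L_ge_2 hd_ws by (simp add: loc_def)
  qed
qed

lemma loc_pad: "L \<le> i \<Longrightarrow> i < n \<Longrightarrow> loc i = hd ws \<and> loc (Suc i mod n) = hd ws"
proof -
  assume i: "L \<le> i" "i < n"
  have "Suc i mod n = Suc i \<or> Suc i mod n = 0" by (metis mod_less mod_self not_less_eq i(2) le_neq_implies_less less_Suc_eq_le)
  then show ?thesis using i L_ge_2 hd_ws by (auto simp: loc_def)
qed

lemma loc_in: "loc i \<in> set ws"
proof (cases "i < L")
  case True then show ?thesis using length_ws by (simp add: loc_def)
next
  case False then show ?thesis using length_ws hd_ws by (simp add: loc_def)
qed

lemma w_pair: "w {p, q} = real (trunc_dist E k (loc p) (loc q))"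
proof (cases "p \<le> q")
  case True then show ?thesis by (simp add: w_def min_def max_def)
next
  case False then show ?thesis by (simp add: w_def min_def max_def trunc_dist_sym)
qed

lemma metric_instance_w: "metric_instance n w"
  unfolding metric_instance_def
proof (intro conjI allI impI)
  fix u v x
  have "trunc_dist E k (loc u) (loc v) \<le> trunc_dist E k (loc u) (loc x) + trunc_dist E k (loc x) (loc v)"
    by (rule trunc_dist_triangle)
  then have "real (trunc_dist E k (loc u) (loc v)) \<le> real (trunc_dist E k (loc u) (loc x)) + real (trunc_dist E k (loc x) (loc v))"
    by linarith
  then show "w {u, v} \<le> w {u, x} + w {x, v}" by (simp add: w_pair)
qed (simp add: w_def)

lemma T0_tour: "is_tour n T0" unfolding T0_def using n3 by (rule is_tour_identity)

lemma w_T0_edge: "i < n \<Longrightarrow> w (tour_edge id n i) = (if i < L then 1 else 0)"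
proof -
  assume i: "i < n"
  show ?thesis
  proof (cases "i < L")
    case True
    have "loc i = ws ! i" using True by (simp add: loc_def)
    then have "w (tour_edge id n i) = real (trunc_dist E k (ws ! i) (ws ! Suc i))"
      by (simp add: tour_edge_def w_pair loc_suc[OF True])
    moreover have "trunc_dist E k (ws ! i) (ws ! Suc i) = 1"
      using trunc_dist_edge[OF ws_edge[OF True], of k] trunc_dist_pos[OF ws_edge_neq[OF True] k1, of E] by simp
    ultimately show ?thesis using True by simp
  next
    case False
    then show ?thesis using loc_pad[of i] i by (simp add: tour_edge_def w_pair trunc_dist_self)
  qed
qed

lemma tour_cost_T0: "tour_cost w T0 = real L"
proof -
  have "tour_cost w T0 = (\<Sum>i<n. w (tour_edge id n i))" unfolding T0_def
    by (rule tour_cost_eq_sum) (use n3 in auto)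
  also have "\<dots> = (\<Sum>i<n. if i < L then 1 else 0)" by (rule sum.cong) (auto simp: w_T0_edge)
  also have "\<dots> = (\<Sum>i<L. (1::real))"
    using L_le_n by (intro sum.mono_neutral_cong_right) auto
  also have "\<dots> = real L" by simp
  finally show ?thesis .
qed

lemma w_tour_edge: "w (tour_edge \<sigma> n i) = real (trunc_dist E k (loc (\<sigma> i)) (loc (\<sigma> (Suc i mod n))))"
  by (simp add: tour_edge_def w_pair)

lemma tour_cost_ge_1: assumes t: "is_tour n T" shows "1 \<le> tour_cost w T"
proof -
  obtain \<sigma> where s: "3 \<le> n" "bij_betw \<sigma> {0..<n} {0..<n}" "T = tour_edge \<sigma> n ` {0..<n}"
    using is_tourE[OF t] by blast
  have im: "\<sigma> ` {0..<n} = {0..<n}" using s(2) by (auto simp: bij_betw_def)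
  have "\<exists>i<n. loc (\<sigma> i) \<noteq> loc (\<sigma> (Suc i mod n))"
  proof (rule ccontr)
    assume "\<not> ?thesis"
    then have eq: "\<And>i. i < n \<Longrightarrow> loc (\<sigma> (Suc i mod n)) = loc (\<sigma> i)" by metis
    have all: "i < n \<Longrightarrow> loc (\<sigma> i) = loc (\<sigma> 0)" for i
    proof (induction i)
      case 0 then show ?case by simp
    next
      case (Suc i)
      then have "Suc i mod n = Suc i" by simp
      then show ?case using eq[of i] Suc by simp
    qed
    have "0 \<in> \<sigma> ` {0..<n}" "1 \<in> \<sigma> ` {0..<n}" using im n3 by auto
    then obtain a b where ab: "a < n" "\<sigma> a = 0" "b < n" "\<sigma> b = 1" by auto
    then have "loc 0 = loc 1" using all[of a] all[of b] by simp
    moreover have "loc 0 = ws ! 0" "loc 1 = ws ! 1" using L_ge_2 by (auto simp: loc_def)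
    moreover have "ws ! 0 \<noteq> ws ! 1" using ws_edge_neq[of 0] L_ge_2 by simp
    ultimately show False by simp
  qed
  then obtain i where i: "i < n" "loc (\<sigma> i) \<noteq> loc (\<sigma> (Suc i mod n))" by blast
  have "1 \<le> w (tour_edge \<sigma> n i)" using trunc_dist_pos[OF i(2) k1] by (simp add: w_tour_edge)
  also have "\<dots> \<le> (\<Sum>j\<in>{0..<n}. w (tour_edge \<sigma> n j))"
    by (rule member_le_sum) (use i in \<open>auto simp: w_tour_edge\<close>)
  also have "\<dots> = tour_cost w T" using tour_cost_eq_sum[OF s(1,2)] s(3) by (simp add: atLeast0LessThan)
  finally show ?thesis .
qed

lemma OPT_ge_1: "1 \<le> OPT n w"
proof -
  obtain T where "is_tour n T" "OPT n w = tour_cost w T" using OPT_attained[OF n3] by blast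
  then show ?thesis using tour_cost_ge_1 by simp
qed

lemma OPT_le_k_card: "OPT n w \<le> real (k * card (set ws))"
proof -
  define ys where "ys = sort_key loc [0..<n]"
  have ys: "distinct ys" "set ys = {0..<n}" "length ys = n" "sorted (map loc ys)"
    by (simp_all add: ys_def distinct_sort sorted_sort_key)
  have bij: "bij_betw ((!) ys) {0..<n} {0..<n}"
    using bij_betw_nth[OF ys(1), of "{0..<n}" "{0..<n}"] ys by (simp add: atLeast0LessThan)
  define g where "g i = trunc_dist E k (loc (ys ! i)) (loc (ys ! (Suc i mod n)))" for i
  have "OPT n w \<le> tour_cost w (tour_edge ((!) ys) n ` {0..<n})"
    using OPT_le_tour_cost is_tourI[OF n3 bij] by blast
  also have "\<dots> = (\<Sum>i<n. w (tour_edge ((!) ys) n i))" by (rule tour_cost_eq_sum[OF n3 bij])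
  also have "\<dots> = real (\<Sum>i<n. g i)" by (simp add: w_tour_edge g_def)
  finally have o1: "OPT n w \<le> real (\<Sum>i<n. g i)" .
  have n1: "n = Suc (n - 1)" using n3 by simp
  have e1: "(\<Sum>i<n. g i) = (\<Sum>i<n - 1. g i) + g (n - 1)"
    by (subst n1) (simp del: Suc_diff_1)
  have "(\<Sum>i<n - 1. g i) = (\<Sum>i<length ys - 1. trunc_dist E k (loc (ys ! i)) (loc (ys ! Suc i)))"
    using ys(3) by (intro sum.cong) (auto simp: g_def)
  also have "\<dots> \<le> k * (card (loc ` set ys) - 1)"
    by (rule sum_sorted_adjacent_le[OF trunc_dist_self trunc_dist_le ys(4)])
  finally have e2: "(\<Sum>i<n - 1. g i) \<le> k * (card (loc ` set ys) - 1)" .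
  have e3: "g (n - 1) \<le> k" by (simp add: g_def trunc_dist_le)
  have s1: "(\<Sum>i<n. g i) \<le> k * (card (loc ` set ys) - 1) + k" using e1 e2 e3 by linarith
  have c1: "1 \<le> card (loc ` set ys)" using ys(2) n3 by (simp add: card_gt_0_iff Suc_le_eq)
  have c2: "card (loc ` set ys) \<le> card (set ws)" using loc_in by (intro card_mono) auto
  have "k * (card (loc ` set ys) - 1) + k = k * card (loc ` set ys)" using c1
    by (cases "card (loc ` set ys)") auto
  also have "\<dots> \<le> k * card (set ws)" using c2 by simp
  finally have "(\<Sum>i<n. g i) \<le> k * card (set ws)" using s1 by linarith
  then show ?thesis using o1 by (meson of_nat_le_iff order_trans)
qed

lemma T0_edge: "r \<in> T0 \<Longrightarrow> \<exists>j<n. r = {j, Suc j mod n}"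
  by (auto simp: T0_def tour_edge_def)

lemma pair_ne: "j < n \<Longrightarrow> j \<noteq> Suc j mod n"
  using n3 by (auto simp: Suc_mod_if)

lemma inj_on_image_loc: "inj_on ((`) loc) trail_pairs"
proof (rule inj_onI)
  fix r r' assume "r \<in> trail_pairs" "r' \<in> trail_pairs" and eq: "loc ` r = loc ` r'"
  then obtain i j where i: "i < L" "r = {i, Suc i mod n}" and j: "j < L" "r' = {j, Suc j mod n}"
    by (auto simp: trail_pairs_def)
  have "walk_edges ws ! i = walk_edges ws ! j"
    using i j eq length_ws by (simp add: walk_edges_nth loc_less loc_suc)
  moreover have "distinct (walk_edges ws)" using ct by (simp add: closed_trail_def)
  ultimately have "i = j" using i j length_ws by (simp add: length_walk_edges nth_eq_iff_index_eq)
  then show "r = r'" using i j by simp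
qed

lemma card_loc_filter_trail_pair:
  assumes "i < L"
  shows "card {x\<in>{i, Suc i mod n}. loc x = v} = (if v \<in> loc ` {i, Suc i mod n} then 1 else 0)"
proof -
  have "loc i \<noteq> loc (Suc i mod n)" using ws_edge_neq[OF assms] by (simp add: loc_less loc_suc assms)
  moreover have "card {x\<in>{i, Suc i mod n}. loc x = v}
      = (if loc i = v then 1 else 0) + (if loc (Suc i mod n) = v then 1 else 0)"
    by (rule card_filter_doubleton[OF pair_ne]) (use assms L_le_n in simp)
  ultimately show ?thesis by auto
qed

lemma even_card_loc_filter_pad_pair:
  assumes "L \<le> j" "j < n"
  shows "even (card {x\<in>{j, Suc j mod n}. loc x = v})"
  using card_filter_doubleton[OF pair_ne[OF assms(2)], of "\<lambda>x. loc x = v"] loc_pad[OF assms] by simp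

lemma trail_pair_iff:
  assumes j: "j < n"
  shows "{j, Suc j mod n} \<in> trail_pairs \<longleftrightarrow> j < L"
proof
  assume "{j, Suc j mod n} \<in> trail_pairs"
  then obtain i where i: "i < L" "{i, Suc i mod n} = {j, Suc j mod n}"
    unfolding trail_pairs_def by blast
  then have "tour_edge id n i = tour_edge id n j" by (simp add: tour_edge_def)
  then show "j < L" using inj_on_tour_edge[OF n3, of id] i(1) j L_le_n by (auto dest: inj_onD)
qed (auto simp: trail_pairs_def)

lemma w_T0:
  assumes "r \<in> T0"
  shows "w r = (if r \<in> trail_pairs then 1 else 0)"
proof -
  obtain j where j: "j < n" "r = {j, Suc j mod n}" using T0_edge[OF assms] by blast
  then show ?thesis using w_T0_edge[OF j(1)] trail_pair_iff[OF j(1)] by (simp add: tour_edge_def)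
qed

lemma card_image_loc_containing:
  assumes R: "R \<subseteq> trail_pairs" "finite R"
  shows "card {g\<in>(`) loc ` R. v \<in> g} = (\<Sum>r\<in>R. card {x\<in>r. loc x = v})"
proof -
  have "inj_on ((`) loc) R" using inj_on_image_loc R(1) by (rule inj_on_subset)
  moreover have "{g\<in>(`) loc ` R. v \<in> g} = (`) loc ` {r\<in>R. v \<in> loc ` r}" by auto
  ultimately have "card {g\<in>(`) loc ` R. v \<in> g} = card {r\<in>R. v \<in> loc ` r}"
    by (simp add: card_image inj_on_subset)
  also have "\<dots> = (\<Sum>r\<in>R. if v \<in> loc ` r then 1 else 0)"
    using R(2) by (simp add: sum.inter_filter[symmetric])
  also have "\<dots> = (\<Sum>r\<in>R. card {x\<in>r. loc x = v})"
  proof (rule sum.cong[OF refl])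
    fix r assume "r \<in> R"
    then obtain i where "i < L" "r = {i, Suc i mod n}" using R(1) unfolding trail_pairs_def by blast
    then show "(if v \<in> loc ` r then 1 else 0) = card {x\<in>r. loc x = v}"
      using card_loc_filter_trail_pair[of i v] by presburger
  qed
  finally show ?thesis .
qed

lemma card_loc_filter_tour_edge:
  assumes "a = {p, q}" "p \<noteq> q"
  shows "card {x\<in>a. loc x = v} = (if loc (Min a) = v then 1 else 0) + (if loc (Max a) = v then 1 else 0)"
  using card_filter_doubleton[OF assms(2), of "\<lambda>x. loc x = v"] assms
  by (cases "p \<le> q") (auto simp: min_def max_def)

text \<open>Along each walk the parity of a degree is fixed by the end points; the end points of added and of
  removed edges balance because both tours have degree two at each position.\<close>

lemma even_degree_walks_and_removed_trail_edges:
  assumes t: "is_tour n T'"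
    and W: "\<And>a. a \<in> T' - T0 \<Longrightarrow> walk E (W a) (loc (Min a)) (loc (Max a)) (d a)"
  shows "even (size (filter_mset (\<lambda>e. v \<in> e)
    ((\<Sum>a\<in>T' - T0. mset (walk_edges (W a))) + mset_set ((`) loc ` ((T0 - T') \<inter> trail_pairs)))))"
proof -
  define \<chi> where "\<chi> r = card {x\<in>r. loc x = v}" for r :: "nat set"
  define A where "A = T' - T0"
  define R where "R = T0 - T'"
  define R1 where "R1 = R \<inter> trail_pairs"
  define len where "len a = length (filter (\<lambda>e. v \<in> e) (walk_edges (W a)))" for a
  have fin: "finite A" "finite R1" "finite R"
    using finite_tour[OF t] finite_tour[OF T0_tour] by (auto simp: A_def R_def R1_def)
  have walks: "even (len a + \<chi> a)" if a: "a \<in> A" for a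
  proof -
    obtain p q where pq: "a = {p, q}" "p \<noteq> q" using is_tour_edgeD[OF t, of a] a unfolding A_def by blast
    have "W a \<noteq> []" "set (walk_edges (W a)) \<subseteq> E" "hd (W a) = loc (Min a)" "last (W a) = loc (Max a)"
      using W a by (auto simp: A_def walk_def)
    then have "even (len a + ((if loc (Min a) = v then 1 else 0) + (if loc (Max a) = v then 1 else 0)))"
      using even_walk_degree[of "W a" E v] two unfolding len_def by (simp add: add.assoc)
    then show ?thesis unfolding \<chi>_def card_loc_filter_tour_edge[OF pq] .
  qed
  have removed: "card {g\<in>(`) loc ` R1. v \<in> g} = (\<Sum>r\<in>R1. \<chi> r)"
    unfolding \<chi>_def using fin(2) by (intro card_image_loc_containing) (auto simp: R1_def)
  have pad: "even (\<Sum>r\<in>R - R1. \<chi> r)"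
  proof (intro dvd_sum)
    fix r assume r: "r \<in> R - R1"
    then obtain j where j: "j < n" "r = {j, Suc j mod n}" using T0_edge by (auto simp: R_def)
    then have "L \<le> j" using r trail_pair_iff[OF j(1)] by (auto simp: R1_def)
    then show "even (\<chi> r)" using even_card_loc_filter_pad_pair j unfolding \<chi>_def by blast
  qed
  have "(\<Sum>a\<in>A. \<chi> a) = (\<Sum>r\<in>R. \<chi> r)"
    unfolding \<chi>_def A_def R_def by (rule sum_card_filter_tour_diff[OF T0_tour t, symmetric])
  also have "\<dots> = (\<Sum>r\<in>R1. \<chi> r) + (\<Sum>r\<in>R - R1. \<chi> r)"
    using sum.subset_diff[of R1 R \<chi>] fin(3) by (auto simp: R1_def)
  finally have balance: "(\<Sum>a\<in>A. \<chi> a) = (\<Sum>r\<in>R1. \<chi> r) + (\<Sum>r\<in>R - R1. \<chi> r)" .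
  have "even (\<Sum>a\<in>A. len a + \<chi> a)" using walks by (intro dvd_sum)
  then have "even ((\<Sum>a\<in>A. len a) + (\<Sum>a\<in>A. \<chi> a))" by (simp only: sum.distrib)
  then have "even ((\<Sum>a\<in>A. len a) + (\<Sum>r\<in>R1. \<chi> r))" using pad unfolding balance by simp
  moreover have "size (filter_mset (\<lambda>e. v \<in> e) (mset (walk_edges (W a)))) = len a" for a
    by (simp add: len_def flip: mset_filter)
  ultimately show ?thesis using removed fin(2)
    by (simp add: filter_mset_sum A_def R_def R1_def)
qed

text \<open>If the added edges cost less than the number of removed trail edges, the walks realising them
  and the removed trail edges form an edge multiset of size below the girth with even degrees; so
  every edge has even multiplicity, and every removed trail edge lies on one of the walks.\<close>

lemma card_removed_trail_pairs_le:
  assumes t: "is_tour n T'" and ck: "card (T0 - T') \<le> k"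
  shows "card ((T0 - T') \<inter> trail_pairs) \<le> (\<Sum>a\<in>T' - T0. trunc_dist E k (loc (Min a)) (loc (Max a)))"
proof (rule ccontr)
  define A where "A = T' - T0"
  define R1 where "R1 = (T0 - T') \<inter> trail_pairs"
  define d where "d a = trunc_dist E k (loc (Min a)) (loc (Max a))" for a
  assume "\<not> ?thesis"
  then have small: "(\<Sum>a\<in>A. d a) < card R1" by (simp add: A_def R1_def d_def)
  have fin: "finite A" "finite (T0 - T')"
    using finite_tour[OF t] finite_tour[OF T0_tour] by (auto simp: A_def)
  have cR1: "card R1 \<le> k" using card_mono[OF fin(2), of R1] ck by (auto simp: R1_def)
  have "\<forall>a\<in>A. \<exists>ws. walk E ws (loc (Min a)) (loc (Max a)) (d a)"
  proof
    fix a assume "a \<in> A"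
    then have "d a \<le> (\<Sum>a\<in>A. d a)" using fin(1) by (intro member_le_sum) auto
    then have "d a < k" using small cR1 by linarith
    then show "\<exists>ws. walk E ws (loc (Min a)) (loc (Max a)) (d a)"
      unfolding d_def by (rule trunc_dist_walk)
  qed
  then obtain W where W: "\<And>a. a \<in> A \<Longrightarrow> walk E (W a) (loc (Min a)) (loc (Max a)) (d a)"
    using bchoice by metis
  define N where "N = (\<Sum>a\<in>A. mset (walk_edges (W a)))"
  define G where "G = (`) loc ` R1"
  have size_N: "size N = (\<Sum>a\<in>A. d a)"
    unfolding N_def using W by (auto simp: length_walk_edges walk_def intro: sum.cong)
  have card_G: "card G = card R1"
    unfolding G_def using inj_on_image_loc by (intro card_image) (auto simp: R1_def intro: inj_on_subset)
  have "set_mset N \<subseteq> E" using W fin(1) by (auto simp: N_def set_mset_sum walk_def)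
  moreover have "G \<subseteq> E"
  proof
    fix g assume "g \<in> G"
    then obtain i where "i < L" "g = loc ` {i, Suc i mod n}"
      unfolding G_def R1_def trail_pairs_def by blast
    then show "g \<in> E" using ws_edge loc_less loc_suc by simp
  qed
  ultimately have sub: "set_mset (N + mset_set G) \<subseteq> E" by (auto simp: G_def R1_def fin)
  have "size (N + mset_set G) < 2 * k" using size_N card_G small cR1 by simp
  moreover have "even (size (filter_mset (\<lambda>e. v \<in> e) (N + mset_set G)))" for v
    using even_degree_walks_and_removed_trail_edges[OF t W] by (simp add: N_def G_def A_def R1_def)
  ultimately have even: "even (count (N + mset_set G) g)" for g
    by (intro even_count_if_size_below_girth[OF sub two girth])
  have "G \<subseteq> set_mset N"
  proof
    fix g assume "g \<in> G"
    then have "count (N + mset_set G) g = count N g + 1" by (simp add: G_def R1_def fin)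
    then have "count N g \<noteq> 0" using even[of g] by presburger
    then show "g \<in># N" by (simp add: count_eq_zero_iff)
  qed
  then have "card G \<le> card (set_mset N)" by (intro card_mono) auto
  also have "\<dots> \<le> size N" by (rule card_set_mset_le_size)
  finally show False using size_N card_G small by linarith
qed

lemma T0_k_optimal: "k_optimal k n w T0"
  unfolding k_optimal_def
proof (intro conjI notI)
  show "is_tour n T0" by (rule T0_tour)
next
  assume "\<exists>T'. k_move k n T0 T' \<and> tour_cost w T' < tour_cost w T0"
  then obtain T' where t: "is_tour n T'" and ck: "card (T0 - T') \<le> k"
    and lt: "tour_cost w T' < tour_cost w T0"
    by (auto simp: k_move_def)
  have fin: "finite T0" "finite T'" using finite_tour T0_tour t by blast+
  have "(\<Sum>r\<in>T0 - T'. w r) = (\<Sum>r\<in>T0 - T'. if r \<in> trail_pairs then 1 else 0)"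
    by (intro sum.cong) (auto simp: w_T0)
  also have "\<dots> = real (card ((T0 - T') \<inter> trail_pairs))"
    using fin by (simp add: sum.If_cases)
  also have "\<dots> \<le> (\<Sum>a\<in>T' - T0. w a)"
    using card_removed_trail_pairs_le[OF t ck] by (simp add: w_def flip: of_nat_sum)
  finally have "(\<Sum>r\<in>T0 - T'. w r) \<le> (\<Sum>a\<in>T' - T0. w a)" .
  moreover have "tour_cost w T0 = (\<Sum>e\<in>T0 \<inter> T'. w e) + (\<Sum>e\<in>T0 - T'. w e)"
    "tour_cost w T' = (\<Sum>e\<in>T' \<inter> T0. w e) + (\<Sum>e\<in>T' - T0. w e)"
    unfolding tour_cost_def using fin by (simp_all add: sum.Int_Diff)
  ultimately show False using lt by (simp add: Int_commute)
qed

lemma trail_ratio_le_alpha: "real L / (real k * real (card (set ws))) \<le> alpha k n"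
proof -
  have opos: "0 < OPT n w" using OPT_ge_1 by simp
  have "set ws \<noteq> {}" using length_ws by auto
  then have "0 < card (set ws)" by (simp add: card_gt_0_iff)
  then have "real L / (real k * real (card (set ws))) \<le> real L / OPT n w"
    using OPT_le_k_card opos k1 by (intro divide_left_mono) simp_all
  also have "\<dots> = tour_cost w T0 / OPT n w" by (simp add: tour_cost_T0)
  also have "\<dots> \<le> alpha k n" by (rule ratio_le_alpha[OF metric_instance_w opos T0_k_optimal])
  finally show ?thesis .
qed

end


lemma alpha_ge_excess_density:
  fixes E :: "nat set set"
  assumes fE: "finite E" and two: "\<forall>e\<in>E. card e = 2"
    and girth: "\<forall>l. has_cycle_of_length E l \<longrightarrow> 2 * k \<le> l" and k1: "1 \<le> k"
    and sub: "\<Union>E \<subseteq> V" and finV: "finite V" and big: "card V < card E"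
    and nE: "card E \<le> n" and n3: "3 \<le> n"
  shows "real (card E - card V) / (real k * real (card V)) \<le> alpha k n"
proof -
  obtain ws where ws: "closed_trail E ws"
    and dense: "(card E - card V) * card (set ws) \<le> card V * length (walk_edges ws)"
    using dense_closed_trail_exists[OF fE two sub finV big] by blast
  have "length (walk_edges ws) = card (set (walk_edges ws))"
    using ws by (simp add: closed_trail_def distinct_card)
  also have "\<dots> \<le> card E" using ws fE by (intro card_mono) (auto simp: closed_trail_def)
  finally have "length ws - 1 \<le> n" using nE by (simp add: length_walk_edges)
  then interpret I: trail_instance E k ws n using two girth k1 ws n3 by unfold_locales auto
  have cV: "0 < card V"
  proof -
    obtain e where e: "e \<in> E" using big by (metis card.empty equals0I not_less0)
    then have "card e = 2" using two by simp
    then obtain x where "x \<in> e" by (metis card.empty equals0I zero_neq_numeral)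
    then have "x \<in> V" using sub e by blast
    then show ?thesis using finV by (auto simp: card_gt_0_iff)
  qed
  have "set ws \<noteq> {}" using I.length_ws by auto
  then have cws: "0 < card (set ws)" by (simp add: card_gt_0_iff)
  have "real (card E - card V) * real (card (set ws)) \<le> real (card V) * real I.L"
    using dense by (metis I.L_def length_walk_edges of_nat_le_iff of_nat_mult)
  then have "real (card E - card V) / (real k * real (card V)) \<le> real I.L / (real k * real (card (set ws)))"
    using cV cws k1 by (simp add: divide_simps) (simp add: algebra_simps mult_left_mono)
  also have "\<dots> \<le> alpha k n" by (rule I.trail_ratio_le_alpha)
  finally show ?thesis .
qed

lemma simple_graphD:
  assumes "simple_graph N E"
  shows "finite E" "\<forall>e\<in>E. card e = 2" "\<Union>E \<subseteq> {0..<N}"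
proof -
  show "\<forall>e\<in>E. card e = 2" "\<Union>E \<subseteq> {0..<N}" using assms by (auto simp: simple_graph_def)
  have "E \<subseteq> Pow {0..<N}" using assms by (auto simp: simple_graph_def)
  then show "finite E" by (rule finite_subset) simp
qed

lemma ex_attained: "\<exists>E. simple_graph N E \<and> enat g \<le> girth E \<and> card E = ex N g"
proof -
  define S where "S = {card E | E. simple_graph N E \<and> enat g \<le> girth E}"
  have "S \<subseteq> card ` Pow (Pow {0..<N})" by (auto simp: S_def simple_graph_def)
  then have fS: "finite S" by (rule finite_subset) simp
  have "\<not> has_cycle_of_length {} l" for l
  proof
    assume "has_cycle_of_length {} l"
    then obtain v where "3 \<le> l" "\<forall>i<l. {v i, v (Suc i mod l)} \<in> ({} :: nat set set)"
      unfolding has_cycle_of_length_def by blast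
    then show False by (metis empty_iff less_le_trans numeral_less_iff zero_less_numeral semiring_norm(76) zero_less_iff_neq_zero le_zero_eq)
  qed
  then have "girth {} = \<infinity>" by (simp add: girth_def top_enat_def)
  then have "0 \<in> S" unfolding S_def by (auto simp: simple_graph_def intro!: exI[of _ "{}"])
  then have "ex N g \<in> S" unfolding ex_def S_def[symmetric] using fS by (intro Max_in) auto
  then show ?thesis by (auto simp: S_def)
qed

lemma girth_le_cycle_length: "enat g \<le> girth E \<Longrightarrow> has_cycle_of_length E l \<Longrightarrow> g \<le> l"
proof -
  assume a: "enat g \<le> girth E" "has_cycle_of_length E l"
  have "girth E \<le> enat l" unfolding girth_def by (rule INF_lower) (use a in simp)
  then show "g \<le> l" using a(1) by (metis enat_ord_simps(1) order_trans)
qed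

lemma alpha_ge_of_ex:
  assumes k1: "1 \<le> k" and n3: "3 \<le> n" and N1: "1 \<le> N"
    and m: "N < m" "m \<le> ex N (2 * k)" "m \<le> n"
  shows "(real m - real N) / (real k * real N) \<le> alpha k n"
proof -
  obtain E where E: "simple_graph N E" "enat (2 * k) \<le> girth E" "card E = ex N (2 * k)"
    using ex_attained by blast
  obtain E' where E': "E' \<subseteq> E" "card E' = m" using obtain_subset_with_card_n m(2) E(3) by metis
  note sp = simple_graphD[OF E(1)]
  have "finite E'" using sp(1) E'(1) by (rule finite_subset[rotated])
  moreover have "\<forall>e\<in>E'. card e = 2" "\<Union>E' \<subseteq> {0..<N}" using sp(2,3) E'(1) by blast+
  moreover have "\<forall>l. has_cycle_of_length E' l \<longrightarrow> 2 * k \<le> l"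
    using girth_le_cycle_length[OF E(2)] has_cycle_of_length_mono E'(1) by blast
  ultimately have "real (card E' - card {0..<N}) / (real k * real (card {0..<N})) \<le> alpha k n"
    using E'(2) m k1 n3 by (intro alpha_ge_excess_density) auto
  then show ?thesis using E'(2) m(1) by (simp add: of_nat_diff)
qed

text \<open>An extremal graph on \<open>N\<close> vertices with \<open>m \<approx> C N\<^sup>c \<le> n\<close> edges has excess density about
  \<open>C N\<^sup>c\<^sup>-\<^sup>1\<close>.\<close>

lemma alpha_ge_of_ex_lower_bound:
  fixes C c :: real
  assumes k1: "1 \<le> k" and n3: "3 \<le> n" and N1: "1 \<le> N"
    and hyp: "C * real N powr c \<le> real (ex N (2 * k))" and Cn: "C * real N powr c \<le> real n"
    and two: "2 \<le> C * real N powr (c - 1)"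
  shows "C * real N powr (c - 1) / (2 * real k) \<le> alpha k n"
proof -
  define x where "x = C * real N powr c"
  define m where "m = nat \<lceil>x\<rceil>"
  have Np: "0 < real N" using N1 by simp
  have xN: "x = real N * (C * real N powr (c - 1))"
    using Np by (simp add: x_def powr_diff powr_one field_simps del: powr_realpow)
  have "real N * 2 \<le> x" using xN two Np by (simp add: mult_left_mono)
  then have x0: "0 \<le> x" using Np by linarith
  have mx: "x \<le> real m" unfolding m_def using x0 by linarith
  have "m \<le> n" unfolding m_def using Cn x_def by (simp add: nat_le_iff ceiling_le_iff)
  moreover have "m \<le> ex N (2 * k)" unfolding m_def using hyp x_def by (simp add: nat_le_iff ceiling_le_iff)
  moreover have "N < m" using \<open>real N * 2 \<le> x\<close> mx N1 by linarith
  ultimately have a: "(real m - real N) / (real k * real N) \<le> alpha k n"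
    using alpha_ge_of_ex k1 n3 N1 by blast
  have "C * real N powr (c - 1) / (2 * real k) \<le> (C * real N powr (c - 1) - 1) / real k"
    using two k1 by (simp add: field_simps)
  also have "\<dots> = (x - real N) / (real k * real N)"
    using Np k1 xN by (simp add: field_simps)
  also have "\<dots> \<le> (real m - real N) / (real k * real N)"
    using mx Np k1 by (intro divide_right_mono) auto
  finally show ?thesis using a by linarith
qed


section \<open>Asymptotics\<close>

text \<open>For given \<open>n\<close> the extremal graph is taken on \<open>N \<approx> (n/C)\<^sup>1\<^sup>/\<^sup>c\<close> vertices, so that it has
  at most \<open>n\<close> edges.\<close>

definition root_floor :: "real \<Rightarrow> real \<Rightarrow> nat \<Rightarrow> nat" where
  "root_floor C c n = nat \<lfloor>(real n / C) powr (1 / c)\<rfloor>"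

lemma root_floor_powr_le:
  assumes "0 < C" "0 < c"
  shows "C * real (root_floor C c n) powr c \<le> real n"
proof -
  define y where "y = (real n / C) powr (1 / c)"
  have "real (root_floor C c n) \<le> y" by (simp add: root_floor_def y_def)
  then have "real (root_floor C c n) powr c \<le> y powr c" using assms by (intro powr_mono2) auto
  also have "y powr c = real n / C" using assms by (simp add: y_def powr_powr)
  finally show ?thesis using assms by (simp add: field_simps)
qed

lemma root_floor_lower:
  assumes C: "0 < C" and c: "1 < c" and N1: "1 \<le> root_floor C c n"
  shows "C powr (1 / c) * real n powr (1 - 1 / c) \<le> 2 powr (c - 1) * (C * real (root_floor C c n) powr (c - 1))"
proof -
  define N where "N = root_floor C c n"
  define y where "y = (real n / C) powr (1 / c)"
  have y0: "0 \<le> y" by (simp add: y_def)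
  have "y \<le> 2 * real N" using N1 y0 by (simp add: N_def root_floor_def y_def) linarith
  then have "y powr (c - 1) \<le> (2 * real N) powr (c - 1)" using c y0 by (intro powr_mono2) auto
  also have "\<dots> = 2 powr (c - 1) * real N powr (c - 1)" by (simp add: powr_mult)
  finally have "y powr (c - 1) \<le> 2 powr (c - 1) * real N powr (c - 1)" .
  moreover have "C * y powr (c - 1) = C powr (1 / c) * real n powr (1 - 1 / c)"
  proof -
    have "y powr (c - 1) = (real n / C) powr (1 - 1 / c)" using c by (simp add: y_def powr_powr field_simps)
    also have "\<dots> = real n powr (1 - 1 / c) / C powr (1 - 1 / c)" using C by (simp add: powr_divide)
    finally show ?thesis using C by (simp add: powr_diff field_simps)
  qed
  ultimately show ?thesis using C by (simp add: N_def) (metis mult_left_mono less_imp_le mult.left_commute)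
qed

lemma eventually_root_floor_ge:
  assumes C: "0 < C" and c: "0 < c"
  shows "eventually (\<lambda>n. M \<le> root_floor C c n) sequentially"
  unfolding eventually_sequentially
proof (intro exI allI impI)
  fix n assume n: "nat \<lceil>C * (real M + 1) powr c\<rceil> \<le> n"
  then have "(real M + 1) powr c \<le> real n / C" using C by (simp add: field_simps)
  then have "((real M + 1) powr c) powr (1 / c) \<le> (real n / C) powr (1 / c)"
    using c by (intro powr_mono2) auto
  then have "real M + 1 \<le> (real n / C) powr (1 / c)" using c by (simp add: powr_powr)
  then show "M \<le> root_floor C c n" unfolding root_floor_def by linarith
qed

lemma two_le_mult_powr:
  fixes C c x :: real
  assumes C: "0 < C" and c: "1 < c" and N: "(2 / C) powr (1 / (c - 1)) \<le> x"
  shows "2 \<le> C * x powr (c - 1)"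
proof -
  have "((2 / C) powr (1 / (c - 1))) powr (c - 1) \<le> x powr (c - 1)"
    using c N by (intro powr_mono2) auto
  moreover have "((2 / C) powr (1 / (c - 1))) powr (c - 1) = 2 / C"
    using c C by (simp add: powr_powr)
  ultimately show ?thesis using C by (simp add: divide_le_eq mult.commute)
qed

theorem theorem3p5:
  fixes k :: nat and c :: real
  assumes "3 \<le> k" and "c > 1"
    and "(\<lambda>n. real (ex n (2 * k))) \<in> \<Omega>(\<lambda>n. real n powr c)"
  shows "(\<lambda>n. alpha k n) \<in> \<Omega>(\<lambda>n. real n powr (1 - 1 / c))"
proof -
  have k1: "1 \<le> k" and c1: "1 < c" and c_pos: "0 < c" using assms(1,2) by simp_all
  obtain C N0 where C: "0 < C" and ex: "\<And>N. N0 \<le> N \<Longrightarrow> C * real N powr c \<le> real (ex N (2 * k))"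
    using assms(3) unfolding bigomega_def eventually_sequentially by force
  define M where "M = max (max N0 1) (nat \<lceil>(2 / C) powr (1 / (c - 1))\<rceil>)"
  define c0 where "c0 = C powr (1 / c) / (2 powr c * real k)"
  have "eventually (\<lambda>n. c0 * norm (real n powr (1 - 1 / c)) \<le> norm (alpha k n)) sequentially"
    using eventually_root_floor_ge[OF C c_pos, of M] eventually_ge_at_top[of 3]
  proof eventually_elim
    case (elim n)
    define N where "N = root_floor C c n"
    have N: "N0 \<le> N" "1 \<le> N" "(2 / C) powr (1 / (c - 1)) \<le> real N"
      using elim unfolding M_def N_def by linarith+
    have "c0 * real n powr (1 - 1 / c) = C powr (1 / c) * real n powr (1 - 1 / c) / (2 powr c * real k)"
      by (simp add: c0_def)
    also have "\<dots> \<le> 2 powr (c - 1) * (C * real N powr (c - 1)) / (2 powr c * real k)"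
      using root_floor_lower[OF C c1 N(2)[unfolded N_def]] by (intro divide_right_mono) (simp_all add: N_def)
    also have "\<dots> = C * real N powr (c - 1) / (2 * real k)"
      by (simp add: powr_diff)
    also have "\<dots> \<le> alpha k n"
      using ex[OF N(1)] root_floor_powr_le[OF C c_pos, of n] two_le_mult_powr[OF C c1 N(3)] elim N(2) k1
      by (intro alpha_ge_of_ex_lower_bound) (auto simp: N_def)
    finally show ?case by simp
  qed
  moreover have "0 < c0" using C k1 by (simp add: c0_def)
  ultimately show ?thesis unfolding bigomega_def by blast
qed

end
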